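(* Let $q\ge 2$. For all integers $m,n\ge 1$, the number $B_m^{(-n)}(q)$ of $q$-ary strong lonesum $m\times n$ matrices equals $$1+\sum_{j=1}^{\min(m,n)}\ \sum_{\substack{(m_0,\ldots,m_j)\in\mathcal{S}_m^j\\ (n_0,\ldots,n_j)\in\mathcal{S}_n^j}}\binom{m}{m_0,m_1,\ldots,m_j}\binom{n}{n_0,n_1,\ldots,n_j}\prod_{i=1}^{j}f_q(m_i,n_{j+1-i}),$$ where $$f_q(r,s)=1+(q-2)rs+r\big((q-1)^s-(q-2)s-1\big)+s\big((q-1)^r-(q-2)r-1\big).$$
   Context: A $q$-ary matrix has entries in $\{0,1,\ldots,q-1\}$; a $q$-ary $m\times n$ matrix is a strong lonesum matrix if no other $q$-ary $m\times n$ matrix has the same row sums and column sums. For $j\ge 1$ and $l\ge 1$, $\mathcal{S}_l^j=\{(l_0,l_1,\ldots,l_j)\in\mathbb{Z}^{j+1}: \sum_{i=0}^j l_i=l,\ l_0\ge 0,\ l_i\ge 1 \text{ for } 1\le i\le j\}$. $\binom{l}{l_0,\ldots,l_j}=\frac{l!}{l_0!\cdots l_j!}$ is the multinomial coefficient. *)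

theory Defs
  imports Main
begin

text \<open>A q-ary m x n matrix is represented as a function nat => nat => nat with
entries < q on the index range {0..<m} x {0..<n} and 0 outside (extensional).\<close>

definition qary_matrix :: "nat \<Rightarrow> nat \<Rightarrow> nat \<Rightarrow> (nat \<Rightarrow> nat \<Rightarrow> nat) \<Rightarrow> bool" where
  "qary_matrix q m n A \<longleftrightarrow>
     (\<forall>i j. (i < m \<and> j < n \<longrightarrow> A i j < q) \<and> (\<not> (i < m \<and> j < n) \<longrightarrow> A i j = 0))"

definition row_sum :: "nat \<Rightarrow> (nat \<Rightarrow> nat \<Rightarrow> nat) \<Rightarrow> nat \<Rightarrow> nat" where
  "row_sum n A i = (\<Sum>j<n. A i j)"

definition col_sum :: "nat \<Rightarrow> (nat \<Rightarrow> nat \<Rightarrow> nat) \<Rightarrow> nat \<Rightarrow> nat" where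
  "col_sum m A j = (\<Sum>i<m. A i j)"

definition strong_lonesum :: "nat \<Rightarrow> nat \<Rightarrow> nat \<Rightarrow> (nat \<Rightarrow> nat \<Rightarrow> nat) \<Rightarrow> bool" where
  "strong_lonesum q m n A \<longleftrightarrow> qary_matrix q m n A \<and>
     (\<forall>B. qary_matrix q m n B \<and> (\<forall>i<m. row_sum n B i = row_sum n A i)
          \<and> (\<forall>j<n. col_sum m B j = col_sum m A j) \<longrightarrow> B = A)"

definition num_strong_lonesum :: "nat \<Rightarrow> nat \<Rightarrow> nat \<Rightarrow> nat" where
  "num_strong_lonesum q m n = card {A. strong_lonesum q m n A}"

text \<open>S_l^j: tuples (l_0,...,l_j), represented as lists of length j+1, summing to l,
with l_0 >= 0 and l_i >= 1 for 1 <= i <= j.\<close>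
definition S_set :: "nat \<Rightarrow> nat \<Rightarrow> nat list set" where
  "S_set l j = {ls. length ls = j + 1 \<and> sum_list ls = l \<and> (\<forall>i\<in>{1..j}. ls ! i \<ge> 1)}"

definition multinom :: "nat \<Rightarrow> nat list \<Rightarrow> nat" where
  "multinom l ls = fact l div (\<Prod>x\<leftarrow>ls. fact x)"

definition f_q :: "nat \<Rightarrow> nat \<Rightarrow> nat \<Rightarrow> int" where
  "f_q q r s = 1 + (int q - 2) * int r * int s
      + int r * ((int q - 1) ^ s - (int q - 2) * int s - 1)
      + int s * ((int q - 1) ^ r - (int q - 2) * int r - 1)"

end

theory Submission
  imports Defs "HOL-Library.FuncSet"
begin

text \<open>
  \<^item> A strong lonesum matrix is swap-free: no \<open>2 \<times> 2\<close> switch moving a unit from one diagonal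
    to the other is possible. Hence the row supports form a chain, and a nonzero such matrix has a
    block shape: a positive block on \<open>R \<times> S\<close> (the top rows and top columns), zeros below it, and
    beside it only the entries \<open>q - 1\<close> and \<open>0\<close>.
  \<^item> The block is a full block (positive and swap-free) and the rest, on \<open>(I - R) \<times> (J - S)\<close>, is
    again strong lonesum; conversely every such pair glues to a strong lonesum matrix. Thus
    \<open>|SL(I,J)| = 1 + \<Sum>\<^sub>R \<^sub>S |FB(R,S)| \<cdot> |SL(I - R, J - S)|\<close> over nonempty \<open>R \<subseteq> I\<close>, \<open>S \<subseteq> J\<close>.
  \<^item> The entries \<open>< q - 1\<close> of a full block lie in one row or one column, which gives
    \<open>|FB(R,S)| = f_q q |R| |S|\<close>.
  \<^item> The right-hand side of the theorem satisfies the same recursion (peel off the last part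
    of \<open>(m\<^sub>0, \<dots>, m\<^sub>j)\<close> and the first positive part of \<open>(n\<^sub>0, \<dots>, n\<^sub>j)\<close>), so both agree by
    induction on the number of rows.
\<close>

section \<open>The right-hand side and its recursion\<close>

lemma finite_S_set: "finite (S_set l j)"
proof -
  have "S_set l j \<subseteq> {xs. set xs \<subseteq> {..l} \<and> length xs = j + 1}"
    unfolding S_set_def by (auto simp: member_le_sum_list)
  then show ?thesis
    by (rule finite_subset) (rule finite_lists_length_eq, simp)
qed

text \<open>The \<open>j\<close> parts \<open>l\<^sub>1, \<dots>, l\<^sub>j\<close> are positive, so \<open>S_set l j\<close> is empty for \<open>j > l\<close>.\<close>

lemma S_set_index_le:
  assumes "ls \<in> S_set l j"
  shows "j \<le> l"
proof -
  have len: "length ls = j + 1" and sum: "sum_list ls = l" and pos: "\<forall>i\<in>{1..j}. ls ! i \<ge> 1"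
    using assms unfolding S_set_def by auto
  have "j = (\<Sum>i\<in>{1..j}. (1::nat))" by simp
  also have "\<dots> \<le> (\<Sum>i\<in>{1..j}. ls ! i)" by (rule sum_mono) (use pos in auto)
  also have "\<dots> \<le> (\<Sum>i<length ls. ls ! i)" by (rule sum_mono2) (use len in auto)
  also have "\<dots> = l" using sum by (simp add: sum_list_sum_nth atLeast0LessThan)
  finally show ?thesis .
qed

lemma S_set_0: "S_set l 0 = {[l]}"
  unfolding S_set_def by (auto simp: length_Suc_conv)

lemma S_set_Suc_snoc:
  "S_set l (Suc j) = (\<lambda>(r, ls). ls @ [r]) ` (SIGMA r:{1..l}. S_set (l - r) j)"
proof (intro set_eqI iffI)
  fix ls assume "ls \<in> S_set l (Suc j)"
  hence len: "length ls = Suc j + 1" and sum: "sum_list ls = l"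
    and pos: "\<forall>i\<in>{1..Suc j}. ls ! i \<ge> 1"
    unfolding S_set_def by auto
  have split: "ls = butlast ls @ [last ls]" using len by (intro append_butlast_last_id[symmetric]) auto
  have "ls ! Suc j \<ge> 1" using pos by auto
  moreover have "last ls = ls ! Suc j" using len by (subst last_conv_nth) auto
  ultimately have "last ls \<ge> 1" by simp
  moreover have "sum_list ls = sum_list (butlast ls) + last ls" by (subst split) simp
  ultimately have "last ls \<in> {1..l}" "butlast ls \<in> S_set (l - last ls) j"
    using len sum pos unfolding S_set_def by (auto simp: nth_butlast)
  with split show "ls \<in> (\<lambda>(r, ls). ls @ [r]) ` (SIGMA r:{1..l}. S_set (l - r) j)"
    by (intro image_eqI[where x = "(last ls, butlast ls)"]) auto
next
  fix ls assume "ls \<in> (\<lambda>(r, ls). ls @ [r]) ` (SIGMA r:{1..l}. S_set (l - r) j)"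
  then obtain r ks where "r \<in> {1..l}" "ks \<in> S_set (l - r) j" "ls = ks @ [r]" by auto
  then show "ls \<in> S_set l (Suc j)"
    unfolding S_set_def by (auto simp: nth_append le_Suc_eq)
qed

lemma inj_on_snoc: "inj_on (\<lambda>(r, ls). ls @ [r]) X"
  by (auto simp: inj_on_def)

definition insert_second :: "nat \<Rightarrow> nat list \<Rightarrow> nat list" where
  "insert_second s ls = hd ls # s # tl ls"

lemma S_set_Suc_insert_second:
  "S_set l (Suc j) = (\<lambda>(s, ls). insert_second s ls) ` (SIGMA s:{1..l}. S_set (l - s) j)"
proof (intro set_eqI iffI)
  fix ls assume "ls \<in> S_set l (Suc j)"
  hence len: "length ls = Suc j + 1" and sum: "sum_list ls = l"
    and pos: "\<forall>i\<in>{1..Suc j}. ls ! i \<ge> 1"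
    unfolding S_set_def by auto
  then obtain a s rest where ls: "ls = a # s # rest"
    by (metis Suc_eq_plus1 length_Suc_conv)
  have "s \<in> {1..l}" using pos[rule_format, of 1] sum ls by auto
  moreover have "a # rest \<in> S_set (l - s) j"
    unfolding S_set_def
  proof (intro CollectI conjI ballI)
    fix i assume i: "i \<in> {1..j}"
    then have "ls ! Suc i \<ge> 1" using pos by auto
    then show "(a # rest) ! i \<ge> 1" using i ls by (cases i) auto
  qed (use len sum ls in auto)
  ultimately show "ls \<in> (\<lambda>(s, ls). insert_second s ls) ` (SIGMA s:{1..l}. S_set (l - s) j)"
    by (intro image_eqI[where x = "(s, a # rest)"]) (auto simp: ls insert_second_def)
next
  fix ls assume "ls \<in> (\<lambda>(s, ls). insert_second s ls) ` (SIGMA s:{1..l}. S_set (l - s) j)"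
  then obtain s ks where s: "s \<in> {1..l}" and ks: "ks \<in> S_set (l - s) j"
    and ls: "ls = insert_second s ks" by auto
  from ks have len: "length ks = j + 1" and sum: "sum_list ks = l - s"
    and pos: "\<forall>i\<in>{1..j}. ks ! i \<ge> 1"
    unfolding S_set_def by auto
  then obtain a rest where ks_eq: "ks = a # rest" by (cases ks) auto
  have ls_eq: "ls = a # s # rest" using ls ks_eq by (simp add: insert_second_def)
  show "ls \<in> S_set l (Suc j)"
    unfolding S_set_def
  proof (intro CollectI conjI ballI)
    fix i assume i: "i \<in> {1..Suc j}"
    show "ls ! i \<ge> 1"
    proof (cases "i = 1")
      case False
      then obtain k where "i = Suc (Suc k)" "k < j" using i by (cases i; cases "i - 1") auto
      moreover have "ks ! Suc k \<ge> 1" using pos \<open>k < j\<close> by auto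
      ultimately show ?thesis using ls_eq ks_eq by simp
    qed (use s ls_eq in simp)
  qed (use len sum s ks_eq ls_eq in auto)
qed

lemma inj_on_insert_second:
  "inj_on (\<lambda>(s, ls). insert_second s ls) (SIGMA s:{1..l}. S_set (l - s) j)"
proof (rule inj_onI, clarify)
  fix s ls s' ls'
  assume "ls \<in> S_set (l - s) j" "ls' \<in> S_set (l - s') j" "insert_second s ls = insert_second s' ls'"
  moreover have "ls \<noteq> []" "ls' \<noteq> []" using calculation unfolding S_set_def by auto
  ultimately show "s = s' \<and> ls = ls'"
    by (cases ls; cases ls') (auto simp: insert_second_def)
qed

lemma prod_fact_dvd_fact_sum: "(\<Prod>x\<leftarrow>ls. fact x) dvd (fact (sum_list ls) :: nat)"
proof (induction ls)
  case (Cons x xs)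
  have "fact (sum_list (x # xs)) = fact x * fact (sum_list xs) * (sum_list (x # xs) choose x)"
    using binomial_fact_lemma[of x "x + sum_list xs"] by simp
  with Cons.IH show ?case by (simp add: mult_dvd_mono)
qed simp

lemma multinom_remove_part:
  assumes "sum_list ls = l - s" "s \<le> l"
    and "(\<Prod>x\<leftarrow>ks. fact x) = fact s * (\<Prod>x\<leftarrow>ls. fact x :: nat)"
  shows "multinom l ks = (l choose s) * multinom (l - s) ls"
proof -
  let ?P = "\<Prod>x\<leftarrow>ls. fact x :: nat"
  have "?P > 0" by (induction ls) auto
  obtain k where k: "fact (l - s) = ?P * k"
    using prod_fact_dvd_fact_sum[of ls] assms(1) by (auto elim: dvdE)
  with \<open>?P > 0\<close> have "multinom (l - s) ls = k" unfolding multinom_def by simp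
  have "fact l = fact s * fact (l - s) * (l choose s)"
    using binomial_fact_lemma[OF assms(2)] by simp
  then have fact_l: "fact l = (fact s * ?P) * ((l choose s) * k)"
    using k by (simp add: ac_simps)
  have "multinom l ks = fact l div (fact s * ?P)"
    by (simp only: multinom_def assms(3))
  also have "\<dots> = ((fact s * ?P) * ((l choose s) * k)) div (fact s * ?P)"
    using fact_l by simp
  also have "\<dots> = (l choose s) * k"
    using \<open>?P > 0\<close> by (simp del: mult.assoc)
  finally show ?thesis using \<open>multinom (l - s) ls = k\<close> by simp
qed

definition layer_term :: "nat \<Rightarrow> nat \<Rightarrow> nat \<Rightarrow> nat \<Rightarrow> nat list \<Rightarrow> nat list \<Rightarrow> int" where
  "layer_term q j m n ms ns = int (multinom m ms) * int (multinom n ns) *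
     (\<Prod>i=1..j. f_q q (ms ! i) (ns ! (j + 1 - i)))"

definition layer :: "nat \<Rightarrow> nat \<Rightarrow> nat \<Rightarrow> nat \<Rightarrow> int" where
  "layer q j m n = (\<Sum>ms\<in>S_set m j. \<Sum>ns\<in>S_set n j. layer_term q j m n ms ns)"

lemma layer_0: "layer q 0 m n = 1"
  unfolding layer_def layer_term_def S_set_0 multinom_def by simp

lemma layer_vanishes:
  assumes "m < j \<or> n < j"
  shows "layer q j m n = 0"
proof -
  have "S_set m j = {} \<or> S_set n j = {}" using assms S_set_index_le by fastforce
  then show ?thesis unfolding layer_def by auto
qed

lemma layer_term_peel:
  assumes r: "r \<in> {1..m}" and ms: "ms \<in> S_set (m - r) j"
    and s: "s \<in> {1..n}" and ns: "ns \<in> S_set (n - s) j"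
  shows "layer_term q (Suc j) m n (ms @ [r]) (insert_second s ns) =
     int (m choose r) * int (n choose s) * f_q q r s * layer_term q j (m - r) (n - s) ms ns"
proof -
  from ms have len: "length ms = j + 1" and sum_ms: "sum_list ms = m - r"
    unfolding S_set_def by auto
  from ns have "length ns = j + 1" and sum_ns: "sum_list ns = n - s"
    unfolding S_set_def by auto
  then obtain a rest where ns_eq: "ns = a # rest" by (cases ns) auto
  have mult_m: "multinom m (ms @ [r]) = (m choose r) * multinom (m - r) ms"
    by (rule multinom_remove_part) (use sum_ms r in auto)
  have mult_n: "multinom n (insert_second s ns) = (n choose s) * multinom (n - s) ns"
    by (rule multinom_remove_part) (use sum_ns s in \<open>auto simp: ns_eq insert_second_def\<close>)
  have shift: "f_q q ((ms @ [r]) ! i) (insert_second s ns ! (Suc j + 1 - i)) =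
      f_q q (ms ! i) (ns ! (j + 1 - i))" if "i \<in> {1..j}" for i
  proof -
    have "Suc j + 1 - i = Suc (Suc (j - i))" "j + 1 - i = Suc (j - i)" using that by auto
    then show ?thesis using that len by (simp add: nth_append ns_eq insert_second_def)
  qed
  have "(\<Prod>i=1..Suc j. f_q q ((ms @ [r]) ! i) (insert_second s ns ! (Suc j + 1 - i)))
      = (\<Prod>i=1..j. f_q q ((ms @ [r]) ! i) (insert_second s ns ! (Suc j + 1 - i)))
        * f_q q ((ms @ [r]) ! Suc j) (insert_second s ns ! 1)"
    by (simp add: prod.cl_ivl_Suc)
  also have "(\<Prod>i=1..j. f_q q ((ms @ [r]) ! i) (insert_second s ns ! (Suc j + 1 - i)))
      = (\<Prod>i=1..j. f_q q (ms ! i) (ns ! (j + 1 - i)))"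
    by (rule prod.cong[OF refl shift])
  also have "f_q q ((ms @ [r]) ! Suc j) (insert_second s ns ! 1) = f_q q r s"
    using len by (simp add: nth_append insert_second_def)
  finally have "(\<Prod>i=1..Suc j. f_q q ((ms @ [r]) ! i) (insert_second s ns ! (Suc j + 1 - i)))
      = (\<Prod>i=1..j. f_q q (ms ! i) (ns ! (j + 1 - i))) * f_q q r s" .
  then show ?thesis
    unfolding layer_term_def mult_m mult_n by (simp add: algebra_simps)
qed

lemma layer_Suc:
  "layer q (Suc j) m n = (\<Sum>r\<in>{1..m}. \<Sum>s\<in>{1..n}.
     int (m choose r) * int (n choose s) * f_q q r s * layer q j (m - r) (n - s))"
proof -
  let ?c = "\<lambda>r s. int (m choose r) * int (n choose s) * f_q q r s"
  have "layer q (Suc j) m n =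
      (\<Sum>(r, ms)\<in>(SIGMA r:{1..m}. S_set (m - r) j). \<Sum>(s, ns)\<in>(SIGMA s:{1..n}. S_set (n - s) j).
         layer_term q (Suc j) m n (ms @ [r]) (insert_second s ns))"
    unfolding layer_def S_set_Suc_snoc[of m] S_set_Suc_insert_second[of n]
      sum.reindex[OF inj_on_snoc] sum.reindex[OF inj_on_insert_second]
    by (simp add: case_prod_unfold)
  also have "\<dots> = (\<Sum>r\<in>{1..m}. \<Sum>ms\<in>S_set (m - r) j. \<Sum>s\<in>{1..n}. \<Sum>ns\<in>S_set (n - s) j.
      layer_term q (Suc j) m n (ms @ [r]) (insert_second s ns))"
    by (simp add: sum.Sigma[symmetric] finite_S_set)
  also have "\<dots> = (\<Sum>r\<in>{1..m}. \<Sum>ms\<in>S_set (m - r) j. \<Sum>s\<in>{1..n}. \<Sum>ns\<in>S_set (n - s) j.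
      ?c r s * layer_term q j (m - r) (n - s) ms ns)"
    by (intro sum.cong refl layer_term_peel)
  also have "\<dots> = (\<Sum>r\<in>{1..m}. \<Sum>s\<in>{1..n}. \<Sum>ms\<in>S_set (m - r) j. \<Sum>ns\<in>S_set (n - s) j.
      ?c r s * layer_term q j (m - r) (n - s) ms ns)"
    by (rule sum.cong[OF refl]) (rule sum.swap)
  also have "\<dots> = (\<Sum>r\<in>{1..m}. \<Sum>s\<in>{1..n}. ?c r s * layer q j (m - r) (n - s))"
    unfolding layer_def by (simp add: sum_distrib_left)
  finally show ?thesis .
qed

definition formula :: "nat \<Rightarrow> nat \<Rightarrow> nat \<Rightarrow> int" where
  "formula q m n = (\<Sum>j\<le>min m n. layer q j m n)"

lemma formula_eq: "formula q m n = 1 + (\<Sum>j=1..min m n. layer q j m n)"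
  unfolding formula_def atMost_atLeast0 by (simp add: sum.atLeast_Suc_atMost layer_0)

lemma formula_extend: "min m n \<le> K \<Longrightarrow> (\<Sum>j\<le>K. layer q j m n) = formula q m n"
  unfolding formula_def by (rule sum.mono_neutral_right) (auto intro: layer_vanishes)

lemma formula_rec:
  "formula q m n = 1 + (\<Sum>r\<in>{1..m}. \<Sum>s\<in>{1..n}.
     int (m choose r) * int (n choose s) * f_q q r s * formula q (m - r) (n - s))"
proof (cases "min m n")
  case 0
  then have "{1..m} = {} \<or> {1..n} = {}" by auto
  with 0 show ?thesis unfolding formula_def by (auto simp: layer_0)
next
  case (Suc K)
  let ?c = "\<lambda>r s. int (m choose r) * int (n choose s) * f_q q r s"
  have "formula q m n = 1 + (\<Sum>j\<le>K. layer q (Suc j) m n)"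
    unfolding formula_def Suc sum.atMost_Suc_shift by (simp add: layer_0)
  also have "(\<Sum>j\<le>K. layer q (Suc j) m n) =
      (\<Sum>r\<in>{1..m}. \<Sum>s\<in>{1..n}. ?c r s * (\<Sum>j\<le>K. layer q j (m - r) (n - s)))"
    unfolding layer_Suc sum_distrib_left by (subst sum.swap) (simp add: sum.swap[of _ "{..K}"])
  also have "\<dots> = (\<Sum>r\<in>{1..m}. \<Sum>s\<in>{1..n}. ?c r s * formula q (m - r) (n - s))"
    using Suc by (intro sum.cong refl) (auto simp: formula_extend)
  finally show ?thesis .
qed

section \<open>Strong lonesum matrices on a rectangle\<close>

definition qary_on :: "nat \<Rightarrow> 'a set \<Rightarrow> 'b set \<Rightarrow> ('a \<Rightarrow> 'b \<Rightarrow> nat) \<Rightarrow> bool" where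
  "qary_on q I J A \<longleftrightarrow>
     (\<forall>i c. (i \<in> I \<and> c \<in> J \<longrightarrow> A i c < q) \<and> (\<not> (i \<in> I \<and> c \<in> J) \<longrightarrow> A i c = 0))"

definition same_line_sums :: "'a set \<Rightarrow> 'b set \<Rightarrow> ('a \<Rightarrow> 'b \<Rightarrow> nat) \<Rightarrow> ('a \<Rightarrow> 'b \<Rightarrow> nat) \<Rightarrow> bool" where
  "same_line_sums I J A B \<longleftrightarrow>
     (\<forall>i\<in>I. (\<Sum>c\<in>J. B i c) = (\<Sum>c\<in>J. A i c)) \<and> (\<forall>c\<in>J. (\<Sum>i\<in>I. B i c) = (\<Sum>i\<in>I. A i c))"

definition lonesum_on :: "nat \<Rightarrow> 'a set \<Rightarrow> 'b set \<Rightarrow> ('a \<Rightarrow> 'b \<Rightarrow> nat) \<Rightarrow> bool" where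
  "lonesum_on q I J A \<longleftrightarrow> qary_on q I J A \<and>
     (\<forall>B. qary_on q I J B \<and> same_line_sums I J A B \<longrightarrow> B = A)"

lemma lonesum_on_qary: "lonesum_on q I J A \<Longrightarrow> qary_on q I J A"
  unfolding lonesum_on_def by simp

lemma strong_lonesum_iff: "strong_lonesum q m n = lonesum_on q {..<m} {..<n}"
  unfolding strong_lonesum_def lonesum_on_def same_line_sums_def qary_matrix_def qary_on_def
    row_sum_def col_sum_def
  by (intro ext) auto

lemma lonesum_on_zero:
  assumes "finite I" "finite J" "0 < q"
  shows "lonesum_on q I J (\<lambda>_ _. 0)"
  unfolding lonesum_on_def
proof (intro conjI allI impI)
  fix B assume B: "qary_on q I J B \<and> same_line_sums I J (\<lambda>_ _. 0) B"
  show "B = (\<lambda>_ _. 0)"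
  proof (intro ext)
    fix i c
    show "B i c = 0"
    proof (cases "i \<in> I \<and> c \<in> J")
      case True
      then have "(\<Sum>c\<in>J. B i c) = 0" using B unfolding same_line_sums_def by simp
      with True assms show ?thesis by simp
    qed (use B in \<open>auto simp: qary_on_def\<close>)
  qed
qed (use assms in \<open>auto simp: qary_on_def\<close>)

lemma sum_two_change:
  fixes f g :: "'a \<Rightarrow> nat"
  assumes "finite J" "c \<in> J" "c' \<in> J" "c \<noteq> c'" "f c + f c' = g c + g c'"
    and "\<And>y. y \<in> J \<Longrightarrow> y \<noteq> c \<Longrightarrow> y \<noteq> c' \<Longrightarrow> f y = g y"
  shows "sum f J = sum g J"
proof -
  have split: "sum h J = h c + h c' + sum h (J - {c} - {c'})" for h :: "'a \<Rightarrow> nat"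
    using assms(1-4) by (simp add: sum.remove[of J c] sum.remove[of "J - {c}" c'] add.assoc)
  have "sum f (J - {c} - {c'}) = sum g (J - {c} - {c'})"
    by (rule sum.cong) (use assms(6) in auto)
  then show ?thesis using split[of f] split[of g] assms(5) by simp
qed

definition switch :: "('a \<Rightarrow> 'b \<Rightarrow> nat) \<Rightarrow> 'a \<Rightarrow> 'a \<Rightarrow> 'b \<Rightarrow> 'b \<Rightarrow> 'a \<Rightarrow> 'b \<Rightarrow> nat" where
  "switch A i i' c c' = (\<lambda>x y.
     if (x, y) = (i, c) \<or> (x, y) = (i', c') then A x y - 1
     else if (x, y) = (i, c') \<or> (x, y) = (i', c) then A x y + 1 else A x y)"

lemma switch_same_line_sums:
  assumes fin: "finite I" "finite J" and mem: "i \<in> I" "i' \<in> I" "c \<in> J" "c' \<in> J"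
    and ne: "i \<noteq> i'" "c \<noteq> c'" and pos: "0 < A i c" "0 < A i' c'"
  shows "same_line_sums I J A (switch A i i' c c')"
  unfolding same_line_sums_def
proof (intro conjI ballI)
  fix x assume "x \<in> I"
  show "(\<Sum>y\<in>J. switch A i i' c c' x y) = (\<Sum>y\<in>J. A x y)"
  proof (cases "x = i \<or> x = i'")
    case True
    show ?thesis
      by (rule sum_two_change[OF fin(2) mem(3,4) ne(2)]) (use True ne pos in \<open>auto simp: switch_def\<close>)
  qed (intro sum.cong, auto simp: switch_def)
next
  fix y assume "y \<in> J"
  show "(\<Sum>x\<in>I. switch A i i' c c' x y) = (\<Sum>x\<in>I. A x y)"
  proof (cases "y = c \<or> y = c'")
    case True
    show ?thesis
      by (rule sum_two_change[OF fin(1) mem(1,2) ne(1)]) (use True ne pos in \<open>auto simp: switch_def\<close>)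
  qed (intro sum.cong, auto simp: switch_def)
qed

text \<open>A matrix is swap-free if no switch keeps it q-ary: whenever \<open>A i c\<close> and \<open>A i' c'\<close> are
  positive (with \<open>i \<noteq> i'\<close>, \<open>c \<noteq> c'\<close>), one of the opposite corners already has the maximal value
  \<open>q - 1\<close>.\<close>

definition swap_free :: "nat \<Rightarrow> 'a set \<Rightarrow> 'b set \<Rightarrow> ('a \<Rightarrow> 'b \<Rightarrow> nat) \<Rightarrow> bool" where
  "swap_free q I J A \<longleftrightarrow> (\<forall>i\<in>I. \<forall>i'\<in>I. \<forall>c\<in>J. \<forall>c'\<in>J.
      i \<noteq> i' \<and> c \<noteq> c' \<and> 0 < A i c \<and> 0 < A i' c' \<longrightarrow> A i c' = q - 1 \<or> A i' c = q - 1)"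

lemma lonesum_on_swap_free:
  assumes fin: "finite I" "finite J" and A: "lonesum_on q I J A"
  shows "swap_free q I J A"
  unfolding swap_free_def
proof (intro ballI impI)
  fix i i' c c' assume mem: "i \<in> I" "i' \<in> I" "c \<in> J" "c' \<in> J"
    and h: "i \<noteq> i' \<and> c \<noteq> c' \<and> 0 < A i c \<and> 0 < A i' c'"
  have qary: "qary_on q I J A" using A by (rule lonesum_on_qary)
  show "A i c' = q - 1 \<or> A i' c = q - 1"
  proof (rule ccontr)
    assume "\<not> ?thesis"
    moreover have "A i c' < q" "A i' c < q" using qary mem unfolding qary_on_def by auto
    ultimately have incr: "A i c' + 1 < q" "A i' c + 1 < q" by auto
    have sw_qary: "qary_on q I J (switch A i i' c c')"
      unfolding qary_on_def
    proof (intro allI conjI impI)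
      fix x y assume "x \<in> I \<and> y \<in> J"
      then have "A x y < q" using qary unfolding qary_on_def by blast
      then show "switch A i i' c c' x y < q" using incr unfolding switch_def by auto
    next
      fix x y assume out: "\<not> (x \<in> I \<and> y \<in> J)"
      then have "A x y = 0" using qary unfolding qary_on_def by blast
      moreover have "(x, y) \<notin> {(i, c), (i', c'), (i, c'), (i', c)}" using out mem by auto
      ultimately show "switch A i i' c c' x y = 0" unfolding switch_def by simp
    qed
    have sw_sums: "same_line_sums I J A (switch A i i' c c')"
      using h by (intro switch_same_line_sums fin mem) auto
    have "switch A i i' c c' = A" using A sw_qary sw_sums unfolding lonesum_on_def by simp
    then have "switch A i i' c c' i c = A i c" by simp
    moreover have "switch A i i' c c' i c = A i c - 1" unfolding switch_def by simp
    moreover have "0 < A i c" using h by simp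
    ultimately show False by linarith
  qed
qed

definition restr :: "'a set \<Rightarrow> 'b set \<Rightarrow> ('a \<Rightarrow> 'b \<Rightarrow> nat) \<Rightarrow> 'a \<Rightarrow> 'b \<Rightarrow> nat" where
  "restr I J A = (\<lambda>i c. if i \<in> I \<and> c \<in> J then A i c else 0)"

lemma qary_on_restr: "qary_on q I J A \<Longrightarrow> I' \<subseteq> I \<Longrightarrow> J' \<subseteq> J \<Longrightarrow> qary_on q I' J' (restr I' J' A)"
  unfolding qary_on_def restr_def by auto

lemma row_sums_agree_outside:
  fixes A B :: "'a \<Rightarrow> 'b \<Rightarrow> nat"
  assumes fin: "finite J" and sub: "I' \<subseteq> I" "J' \<subseteq> J"
    and agree: "\<And>i c. i \<in> I \<Longrightarrow> c \<in> J \<Longrightarrow> \<not> (i \<in> I' \<and> c \<in> J') \<Longrightarrow> B i c = A i c"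
  shows "(\<forall>i\<in>I. (\<Sum>c\<in>J. B i c) = (\<Sum>c\<in>J. A i c)) \<longleftrightarrow>
    (\<forall>i\<in>I'. (\<Sum>c\<in>J'. B i c) = (\<Sum>c\<in>J'. A i c))"
proof -
  have split: "sum f J = sum f J' + sum f (J - J')" for f :: "'b \<Rightarrow> nat"
    using sum.subset_diff[OF sub(2) fin] by (simp add: add.commute)
  have inside: "(\<Sum>c\<in>J. B i c) = (\<Sum>c\<in>J. A i c) \<longleftrightarrow> (\<Sum>c\<in>J'. B i c) = (\<Sum>c\<in>J'. A i c)"
    if "i \<in> I'" for i
  proof -
    have "(\<Sum>c\<in>J - J'. B i c) = (\<Sum>c\<in>J - J'. A i c)" using agree that sub by (intro sum.cong) auto
    then show ?thesis using split[of "B i"] split[of "A i"] by simp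
  qed
  have outside: "(\<Sum>c\<in>J. B i c) = (\<Sum>c\<in>J. A i c)" if "i \<in> I - I'" for i
    using agree that by (intro sum.cong) auto
  show ?thesis
  proof
    assume "\<forall>i\<in>I. (\<Sum>c\<in>J. B i c) = (\<Sum>c\<in>J. A i c)"
    then show "\<forall>i\<in>I'. (\<Sum>c\<in>J'. B i c) = (\<Sum>c\<in>J'. A i c)" using inside sub by auto
  next
    assume *: "\<forall>i\<in>I'. (\<Sum>c\<in>J'. B i c) = (\<Sum>c\<in>J'. A i c)"
    show "\<forall>i\<in>I. (\<Sum>c\<in>J. B i c) = (\<Sum>c\<in>J. A i c)"
    proof
      fix i assume "i \<in> I"
      then show "(\<Sum>c\<in>J. B i c) = (\<Sum>c\<in>J. A i c)" using * inside outside by (cases "i \<in> I'") auto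
    qed
  qed
qed

lemma same_line_sums_restr:
  assumes fin: "finite I" "finite J" and sub: "I' \<subseteq> I" "J' \<subseteq> J"
    and agree: "\<And>i c. i \<in> I \<Longrightarrow> c \<in> J \<Longrightarrow> \<not> (i \<in> I' \<and> c \<in> J') \<Longrightarrow> B i c = A i c"
  shows "same_line_sums I J A B \<longleftrightarrow> same_line_sums I' J' (restr I' J' A) (restr I' J' B)"
proof -
  have rows: "(\<forall>i\<in>I. (\<Sum>c\<in>J. B i c) = (\<Sum>c\<in>J. A i c)) \<longleftrightarrow>
      (\<forall>i\<in>I'. (\<Sum>c\<in>J'. B i c) = (\<Sum>c\<in>J'. A i c))"
    by (rule row_sums_agree_outside[OF fin(2) sub agree])
  have cols: "(\<forall>c\<in>J. (\<Sum>i\<in>I. B i c) = (\<Sum>i\<in>I. A i c)) \<longleftrightarrow>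
      (\<forall>c\<in>J'. (\<Sum>i\<in>I'. B i c) = (\<Sum>i\<in>I'. A i c))"
    by (rule row_sums_agree_outside[where A = "\<lambda>c i. A i c" and B = "\<lambda>c i. B i c", OF fin(1) sub(2,1)])
      (use agree in auto)
  have "same_line_sums I J A B \<longleftrightarrow>
      (\<forall>i\<in>I'. (\<Sum>c\<in>J'. B i c) = (\<Sum>c\<in>J'. A i c)) \<and> (\<forall>c\<in>J'. (\<Sum>i\<in>I'. B i c) = (\<Sum>i\<in>I'. A i c))"
    unfolding same_line_sums_def rows cols ..
  also have "\<dots> \<longleftrightarrow> same_line_sums I' J' (restr I' J' A) (restr I' J' B)"
    unfolding same_line_sums_def restr_def by simp
  finally show ?thesis .
qed

text \<open>Every restriction of a strong lonesum matrix to a subrectangle is strong lonesum: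
  a competitor on the subrectangle extends by the old entries to a competitor on the whole.\<close>

lemma lonesum_on_restr:
  assumes fin: "finite I" "finite J" and sub: "I' \<subseteq> I" "J' \<subseteq> J" and A: "lonesum_on q I J A"
  shows "lonesum_on q I' J' (restr I' J' A)"
  unfolding lonesum_on_def
proof (intro conjI allI impI)
  have qary: "qary_on q I J A" using A by (rule lonesum_on_qary)
  then show "qary_on q I' J' (restr I' J' A)" using sub by (rule qary_on_restr)
  fix B' assume B': "qary_on q I' J' B' \<and> same_line_sums I' J' (restr I' J' A) B'"
  define B where "B = (\<lambda>i c. if i \<in> I' \<and> c \<in> J' then B' i c else A i c)"
  have restr_B: "restr I' J' B = B'" using B' unfolding B_def restr_def qary_on_def by (auto simp: fun_eq_iff)
  have "qary_on q I J B" using B' qary sub unfolding B_def qary_on_def by auto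
  moreover have "same_line_sums I J A B \<longleftrightarrow> same_line_sums I' J' (restr I' J' A) (restr I' J' B)"
    by (rule same_line_sums_restr[OF fin sub]) (auto simp: B_def)
  then have "same_line_sums I J A B" using B' by (simp add: restr_B)
  ultimately have "B = A" using A unfolding lonesum_on_def by simp
  from restr_B this show "B' = restr I' J' A" by simp
qed

section \<open>The block structure of a strong lonesum matrix\<close>

definition nonzero_col :: "'a set \<Rightarrow> ('a \<Rightarrow> 'b \<Rightarrow> nat) \<Rightarrow> 'b \<Rightarrow> bool" where
  "nonzero_col I A c \<longleftrightarrow> (\<exists>i\<in>I. 0 < A i c)"

definition top_rows :: "'a set \<Rightarrow> 'b set \<Rightarrow> ('a \<Rightarrow> 'b \<Rightarrow> nat) \<Rightarrow> 'a set" where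
  "top_rows I J A = {i \<in> I. \<forall>c\<in>J. nonzero_col I A c \<longrightarrow> 0 < A i c}"

definition top_cols :: "'a set \<Rightarrow> 'b set \<Rightarrow> ('a \<Rightarrow> 'b \<Rightarrow> nat) \<Rightarrow> 'b set" where
  "top_cols I J A = {c \<in> J. nonzero_col I A c \<and> (\<forall>i\<in>I. 0 < A i c \<longrightarrow> i \<in> top_rows I J A)}"

definition block_shape :: "nat \<Rightarrow> 'a set \<Rightarrow> 'b set \<Rightarrow> 'a set \<Rightarrow> 'b set \<Rightarrow> ('a \<Rightarrow> 'b \<Rightarrow> nat) \<Rightarrow> bool" where
  "block_shape q I J R S A \<longleftrightarrow> R \<subseteq> I \<and> S \<subseteq> J \<and> R \<noteq> {} \<and> S \<noteq> {} \<and>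
     (\<forall>i\<in>R. \<forall>c\<in>S. 0 < A i c) \<and> (\<forall>i\<in>I - R. \<forall>c\<in>S. A i c = 0) \<and>
     (\<forall>i\<in>R. \<forall>c\<in>J - S. A i c = (if nonzero_col (I - R) A c then q - 1 else 0))"

lemma chain_has_greatest:
  assumes "finite X" "X \<noteq> {}" "\<And>x y. x \<in> X \<Longrightarrow> y \<in> X \<Longrightarrow> F x \<subseteq> F y \<or> F y \<subseteq> F x"
  shows "\<exists>x\<in>X. \<forall>y\<in>X. F y \<subseteq> F x"
  using assms
proof (induction X rule: finite_ne_induct)
  case (insert x X)
  then obtain m where m: "m \<in> X" "\<forall>y\<in>X. F y \<subseteq> F m" by blast
  show ?case
  proof (cases "F x \<subseteq> F m")
    case True
    with m show ?thesis by blast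
  next
    case False
    with insert.prems m have "F m \<subseteq> F x" by blast
    with m show ?thesis by blast
  qed
qed simp

context
  fixes q :: nat and I :: "'a set" and J :: "'b set" and A :: "'a \<Rightarrow> 'b \<Rightarrow> nat"
  assumes q: "q \<ge> 2" and fin: "finite I" "finite J"
    and qary: "qary_on q I J A" and swap_free: "swap_free q I J A"
begin

text \<open>In a swap-free matrix the row supports form a chain: two incomparable supports give a
  switchable \<open>2 \<times> 2\<close> submatrix with zero anti-diagonal.\<close>

lemma row_supports_chain:
  assumes "i \<in> I" "i' \<in> I"
  shows "{c \<in> J. 0 < A i c} \<subseteq> {c \<in> J. 0 < A i' c} \<or> {c \<in> J. 0 < A i' c} \<subseteq> {c \<in> J. 0 < A i c}"
proof (rule ccontr)
  assume "\<not> ?thesis"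
  then obtain c c' where c: "c \<in> J" "0 < A i c" "A i' c = 0" and c': "c' \<in> J" "0 < A i' c'" "A i c' = 0"
    by auto
  then have "i \<noteq> i'" "c \<noteq> c'" by auto
  with assms c c' show False
    using swap_free[unfolded swap_free_def, rule_format, of i i' c c'] q by auto
qed

lemma greatest_row_support:
  assumes "X \<subseteq> I" "X \<noteq> {}"
  obtains x where "x \<in> X" "\<And>y. y \<in> X \<Longrightarrow> {c \<in> J. 0 < A y c} \<subseteq> {c \<in> J. 0 < A x c}"
  using chain_has_greatest[of X "\<lambda>i. {c \<in> J. 0 < A i c}"] assms row_supports_chain
    finite_subset[OF assms(1) fin(1)] by blast

lemma top_rows_nonempty:
  assumes "A \<noteq> (\<lambda>_ _. 0)"
  shows "top_rows I J A \<noteq> {}"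
proof -
  obtain r where r: "r \<in> I" "\<And>y. y \<in> I \<Longrightarrow> {c \<in> J. 0 < A y c} \<subseteq> {c \<in> J. 0 < A r c}"
  proof (rule greatest_row_support)
    show "I \<noteq> {}" using assms qary unfolding qary_on_def by (auto simp: fun_eq_iff)
  qed auto
  then have "r \<in> top_rows I J A" unfolding top_rows_def nonzero_col_def by blast
  then show ?thesis by blast
qed

text \<open>A column that is nonzero but not positive in every top row would make some non-top row
  dominate the other non-top rows, which yields a top column.\<close>

lemma top_cols_nonempty:
  assumes "A \<noteq> (\<lambda>_ _. 0)"
  shows "top_cols I J A \<noteq> {}"
proof (cases "I - top_rows I J A = {}")
  case True
  obtain i c where nz: "A i c \<noteq> 0" using assms by (auto simp: fun_eq_iff)
  then have "i \<in> I \<and> c \<in> J" using qary[unfolded qary_on_def, rule_format, of i c] by auto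
  with nz have "i \<in> I" "c \<in> J" "0 < A i c" by auto
  with True have "c \<in> top_cols I J A" unfolding top_cols_def nonzero_col_def by auto
  then show ?thesis by blast
next
  case False
  obtain i1 where i1: "i1 \<in> I - top_rows I J A"
    and dom: "\<And>y. y \<in> I - top_rows I J A \<Longrightarrow> {c \<in> J. 0 < A y c} \<subseteq> {c \<in> J. 0 < A i1 c}"
    by (rule greatest_row_support[of "I - top_rows I J A"]) (use False in auto)
  then obtain c where c: "c \<in> J" "nonzero_col I A c" "\<not> 0 < A i1 c"
    unfolding top_rows_def by auto
  have "i \<in> top_rows I J A" if i: "i \<in> I" "0 < A i c" for i
  proof (rule ccontr)
    assume "i \<notin> top_rows I J A"
    with i have "{c \<in> J. 0 < A i c} \<subseteq> {c \<in> J. 0 < A i1 c}" by (intro dom) simp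
    from subsetD[OF this, of c] i c show False by simp
  qed
  with c have "c \<in> top_cols I J A" unfolding top_cols_def by auto
  then show ?thesis by blast
qed

text \<open>Beside the top block, a top row has entry \<open>q - 1\<close> in columns that are nonzero in the other
  rows (otherwise a switch with the top block is possible) and \<open>0\<close> elsewhere (otherwise the
  column would be a top column).\<close>

lemma beside_top_block:
  assumes "i \<in> top_rows I J A" "c \<in> J - top_cols I J A"
  shows "A i c = (if nonzero_col (I - top_rows I J A) A c then q - 1 else 0)"
proof (cases "nonzero_col (I - top_rows I J A) A c")
  case True
  then obtain i' where i': "i' \<in> I - top_rows I J A" "0 < A i' c" unfolding nonzero_col_def by auto
  have "A \<noteq> (\<lambda>_ _. 0)" using i' by auto
  then obtain c1 where c1: "c1 \<in> top_cols I J A" using top_cols_nonempty by blast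
  then have c1J: "c1 \<in> J" "nonzero_col I A c1" and c1_top: "\<forall>i\<in>I. 0 < A i c1 \<longrightarrow> i \<in> top_rows I J A"
    unfolding top_cols_def by auto
  then have "A i' c1 = 0" using i' by auto
  moreover have "0 < A i c1" using assms(1) c1J unfolding top_rows_def by auto
  moreover have "i \<in> I" "c \<in> J" "i' \<in> I" using assms i' unfolding top_rows_def by auto
  moreover have "c1 \<noteq> c" "i \<noteq> i'" using c1 assms i' by auto
  ultimately have "A i c = q - 1"
    using swap_free[unfolded swap_free_def, rule_format, of i i' c1 c] i' c1J q by auto
  with True show ?thesis by simp
next
  case False
  have "\<not> 0 < A i c"
  proof
    assume pos: "0 < A i c"
    have "i \<in> I" "c \<in> J" using assms unfolding top_rows_def by auto
    with pos have "nonzero_col I A c" unfolding nonzero_col_def by auto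
    moreover have "\<forall>i'\<in>I. 0 < A i' c \<longrightarrow> i' \<in> top_rows I J A"
      using False unfolding nonzero_col_def by (metis DiffI less_not_refl)
    ultimately have "c \<in> top_cols I J A" using \<open>c \<in> J\<close> unfolding top_cols_def by auto
    with assms show False by simp
  qed
  with False show ?thesis by simp
qed

lemma block_shape_top:
  assumes "A \<noteq> (\<lambda>_ _. 0)"
  shows "block_shape q I J (top_rows I J A) (top_cols I J A) A"
proof -
  have "top_rows I J A \<subseteq> I" "top_cols I J A \<subseteq> J" unfolding top_rows_def top_cols_def by auto
  moreover have "0 < A i c" if "i \<in> top_rows I J A" "c \<in> top_cols I J A" for i c
    using that unfolding top_rows_def top_cols_def by blast
  moreover have "A i c = 0" if "i \<in> I - top_rows I J A" "c \<in> top_cols I J A" for i c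
    using that unfolding top_cols_def by blast
  ultimately show ?thesis
    unfolding block_shape_def using top_rows_nonempty[OF assms] top_cols_nonempty[OF assms] beside_top_block
    by blast
qed

end

lemma block_shape_top_rows:
  assumes q: "q \<ge> 2" and shape: "block_shape q I J R S A"
  shows "top_rows I J A = R"
proof -
  have RI: "R \<subseteq> I" and SJ: "S \<subseteq> J" and "R \<noteq> {}" "S \<noteq> {}"
    and block: "\<forall>i\<in>R. \<forall>c\<in>S. 0 < A i c" and below: "\<forall>i\<in>I - R. \<forall>c\<in>S. A i c = 0"
    and beside: "\<forall>i\<in>R. \<forall>c\<in>J - S. A i c = (if nonzero_col (I - R) A c then q - 1 else 0)"
    using shape unfolding block_shape_def by auto
  obtain r c0 where r: "r \<in> R" and c0: "c0 \<in> S" using \<open>R \<noteq> {}\<close> \<open>S \<noteq> {}\<close> by blast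
  show ?thesis
  proof (intro set_eqI iffI)
    fix i assume "i \<in> top_rows I J A"
    moreover have "nonzero_col I A c0" using block r c0 RI unfolding nonzero_col_def by auto
    ultimately have "i \<in> I" "0 < A i c0" using c0 SJ unfolding top_rows_def by auto
    then show "i \<in> R" using below c0 by (metis DiffI less_not_refl)
  next
    fix i assume i: "i \<in> R"
    have "0 < A i c" if "c \<in> J" "nonzero_col I A c" for c
    proof (cases "c \<in> S")
      case False
      from \<open>nonzero_col I A c\<close> obtain i' where i': "i' \<in> I" "0 < A i' c" unfolding nonzero_col_def by auto
      have "nonzero_col (I - R) A c"
      proof (cases "i' \<in> R")
        case True
        then show ?thesis using beside i' that False by (auto split: if_splits)
      qed (use i' in \<open>auto simp: nonzero_col_def\<close>)
      then show ?thesis using beside i that False q by auto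
    qed (use block i in auto)
    then show "i \<in> top_rows I J A" using i RI unfolding top_rows_def by auto
  qed
qed

lemma block_shape_top_cols:
  assumes q: "q \<ge> 2" and shape: "block_shape q I J R S A"
  shows "top_cols I J A = S"
proof -
  have RI: "R \<subseteq> I" and SJ: "S \<subseteq> J" and "R \<noteq> {}"
    and block: "\<forall>i\<in>R. \<forall>c\<in>S. 0 < A i c" and below: "\<forall>i\<in>I - R. \<forall>c\<in>S. A i c = 0"
    and beside: "\<forall>i\<in>R. \<forall>c\<in>J - S. A i c = (if nonzero_col (I - R) A c then q - 1 else 0)"
    using shape unfolding block_shape_def by auto
  have R: "top_rows I J A = R" using block_shape_top_rows[OF assms] .
  show ?thesis
  proof (intro set_eqI iffI)
    fix c assume "c \<in> top_cols I J A"
    then have c: "c \<in> J" "nonzero_col I A c" "\<forall>i\<in>I. 0 < A i c \<longrightarrow> i \<in> R"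
      unfolding top_cols_def R by auto
    show "c \<in> S"
    proof (rule ccontr)
      assume "c \<notin> S"
      from c obtain i where i: "i \<in> I" "0 < A i c" unfolding nonzero_col_def by auto
      with c have "i \<in> R" by auto
      with i c \<open>c \<notin> S\<close> beside have "nonzero_col (I - R) A c" by (auto split: if_splits)
      with c show False unfolding nonzero_col_def by auto
    qed
  next
    fix c assume c: "c \<in> S"
    obtain r where "r \<in> R" using \<open>R \<noteq> {}\<close> by blast
    then have "nonzero_col I A c" using block c RI unfolding nonzero_col_def by auto
    moreover have "\<forall>i\<in>I. 0 < A i c \<longrightarrow> i \<in> R" using below c by (metis DiffI less_not_refl)
    ultimately show "c \<in> top_cols I J A" using c SJ unfolding top_cols_def R by auto
  qed
qed

section \<open>Full blocks and their number\<close>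

definition full_blocks :: "nat \<Rightarrow> 'a set \<Rightarrow> 'b set \<Rightarrow> ('a \<Rightarrow> 'b \<Rightarrow> nat) set" where
  "full_blocks q R S = {B. qary_on q R S B \<and> (\<forall>i\<in>R. \<forall>c\<in>S. 0 < B i c) \<and> swap_free q R S B}"

definition pos_funs :: "nat \<Rightarrow> 'a set \<Rightarrow> ('a \<Rightarrow> nat) set" where
  "pos_funs q D = {g. \<forall>x. (x \<in> D \<longrightarrow> 1 \<le> g x \<and> g x < q) \<and> (x \<notin> D \<longrightarrow> g x = 0)}"

definition deficient :: "nat \<Rightarrow> 'a set \<Rightarrow> ('a \<Rightarrow> nat) \<Rightarrow> 'a set" where
  "deficient q D g = {x \<in> D. g x < q - 1}"

lemma pos_funs_eq_image:
  "pos_funs q D = (\<lambda>f x. if x \<in> D then f x else 0) ` PiE D (\<lambda>_. {1..<q})"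
proof (intro set_eqI iffI)
  fix g assume g: "g \<in> pos_funs q D"
  then have "g = (\<lambda>x. if x \<in> D then restrict g D x else 0)"
    unfolding pos_funs_def by (auto simp: fun_eq_iff)
  moreover have "restrict g D \<in> PiE D (\<lambda>_. {1..<q})" using g unfolding pos_funs_def by auto
  ultimately show "g \<in> (\<lambda>f x. if x \<in> D then f x else 0) ` PiE D (\<lambda>_. {1..<q})" by blast
qed (auto simp: pos_funs_def PiE_def Pi_def)

lemma inj_on_extend_zero: "inj_on (\<lambda>f x. if x \<in> D then f x else (0::nat)) (PiE D B)"
proof (rule inj_onI)
  fix f g assume f: "f \<in> PiE D B" and g: "g \<in> PiE D B"
    and eq: "(\<lambda>x. if x \<in> D then f x else 0) = (\<lambda>x. if x \<in> D then g x else 0)"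
  show "f = g"
  proof (rule PiE_ext[OF f g])
    fix x assume "x \<in> D"
    then show "f x = g x" using fun_cong[OF eq, of x] by simp
  qed
qed

lemma finite_pos_funs: "finite D \<Longrightarrow> finite (pos_funs q D)"
  unfolding pos_funs_eq_image by (intro finite_imageI finite_PiE) auto

lemma card_pos_funs: "finite D \<Longrightarrow> card (pos_funs q D) = (q - 1) ^ card D"
  unfolding pos_funs_eq_image card_image[OF inj_on_extend_zero] by (simp add: card_PiE)

lemma card_pos_funs_no_deficient:
  assumes "q \<ge> 2"
  shows "card {g \<in> pos_funs q D. deficient q D g = {}} = 1"
proof -
  have "{g \<in> pos_funs q D. deficient q D g = {}} = {\<lambda>x. if x \<in> D then q - 1 else 0}"
  proof (intro set_eqI iffI)
    fix g assume "g \<in> {g \<in> pos_funs q D. deficient q D g = {}}"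
    then have "\<forall>x. (x \<in> D \<longrightarrow> g x < q \<and> \<not> g x < q - 1) \<and> (x \<notin> D \<longrightarrow> g x = 0)"
      unfolding pos_funs_def deficient_def by auto
    then show "g \<in> {\<lambda>x. if x \<in> D then q - 1 else 0}" by (force simp: fun_eq_iff)
  qed (use assms in \<open>auto simp: pos_funs_def deficient_def\<close>)
  then show ?thesis by simp
qed

text \<open>A function with a single deficient position \<open>x\<close> is determined by \<open>x\<close> and its value
  \<open>v \<in> {1..<q-1}\<close> there.\<close>

lemma card_pos_funs_one_deficient:
  assumes "q \<ge> 2" "finite D"
  shows "card {g \<in> pos_funs q D. card (deficient q D g) = 1} = card D * (q - 2)"
proof -
  let ?h = "\<lambda>(x, v) y. if y = x then v else if y \<in> D then q - 1 else (0::nat)"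
  have eq: "{g \<in> pos_funs q D. card (deficient q D g) = 1} = ?h ` (D \<times> {1..<q-1})"
  proof (intro set_eqI iffI)
    fix g assume g: "g \<in> {g \<in> pos_funs q D. card (deficient q D g) = 1}"
    then obtain x where M: "deficient q D g = {x}" by (auto simp: card_Suc_eq)
    have range: "\<forall>y. (y \<in> D \<longrightarrow> 1 \<le> g y \<and> g y < q) \<and> (y \<notin> D \<longrightarrow> g y = 0)"
      using g unfolding pos_funs_def by auto
    have x: "x \<in> D" "g x < q - 1" using M unfolding deficient_def by auto
    have "g y = q - 1" if "y \<in> D" "y \<noteq> x" for y
      using M range that unfolding deficient_def by force
    then have "g = ?h (x, g x)" using range by (auto simp: fun_eq_iff)
    moreover have "(x, g x) \<in> D \<times> {1..<q-1}" using x range by auto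
    ultimately show "g \<in> ?h ` (D \<times> {1..<q-1})" by blast
  next
    fix g assume "g \<in> ?h ` (D \<times> {1..<q-1})"
    then obtain x v where "x \<in> D" "1 \<le> v" "v < q - 1" and g: "g = ?h (x, v)" by auto
    then have "g \<in> pos_funs q D" "deficient q D g = {x}"
      using assms unfolding g pos_funs_def deficient_def by auto
    then show "g \<in> {g \<in> pos_funs q D. card (deficient q D g) = 1}" by simp
  qed
  have "inj_on ?h (D \<times> {1..<q-1})"
  proof (rule inj_onI)
    fix p p' assume p: "p \<in> D \<times> {1..<q-1}" "p' \<in> D \<times> {1..<q-1}" and same: "?h p = ?h p'"
    obtain x v x' v' where pp: "p = (x, v)" "p' = (x', v')" by fastforce
    have "x = x'"
    proof (rule ccontr)
      assume "x \<noteq> x'"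
      then show False using fun_cong[OF same, of x] p pp by auto
    qed
    then show "p = p'" using fun_cong[OF same, of x] pp by simp
  qed
  then show ?thesis
    unfolding eq by (simp add: card_image card_cartesian_product numeral_2_eq_2)
qed

lemma card_pos_funs_few_deficient:
  assumes q: "q \<ge> 2" and D: "finite D"
  shows "card {g \<in> pos_funs q D. card (deficient q D g) \<le> 1} = 1 + card D * (q - 2)"
proof -
  let ?V = "pos_funs q D"
  have fin: "finite X" if "X \<subseteq> ?V" for X using finite_subset[OF that finite_pos_funs[OF D]] .
  have "finite (deficient q D g)" for g using D unfolding deficient_def by auto
  then have "card (deficient q D g) \<le> 1 \<longleftrightarrow> deficient q D g = {} \<or> card (deficient q D g) = 1" for g
    by (auto simp: le_Suc_eq)
  then have "{g \<in> ?V. card (deficient q D g) \<le> 1}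
      = {g \<in> ?V. deficient q D g = {}} \<union> {g \<in> ?V. card (deficient q D g) = 1}"
    by blast
  then have "card {g \<in> ?V. card (deficient q D g) \<le> 1}
      = card {g \<in> ?V. deficient q D g = {}} + card {g \<in> ?V. card (deficient q D g) = 1}"
    by (simp add: card_Un_disjoint fin disjoint_iff)
  then show ?thesis
    using card_pos_funs_no_deficient[OF q] card_pos_funs_one_deficient[OF q D] by simp
qed

lemma card_pos_funs_many_deficient:
  assumes q: "q \<ge> 2" and D: "finite D"
  shows "int (card {g \<in> pos_funs q D. 2 \<le> card (deficient q D g)})
    = (int q - 1) ^ card D - 1 - int (card D) * (int q - 2)"
proof -
  let ?V = "pos_funs q D"
  let ?few = "{g \<in> ?V. card (deficient q D g) \<le> 1}"
  let ?many = "{g \<in> ?V. 2 \<le> card (deficient q D g)}"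
  have fin: "finite X" if "X \<subseteq> ?V" for X using finite_subset[OF that finite_pos_funs[OF D]] .
  have "?V = ?many \<union> ?few" by auto
  moreover have "card (?many \<union> ?few) = card ?many + card ?few"
    by (rule card_Un_disjoint) (auto intro: fin)
  ultimately have "card ?V = card ?many + card ?few" by simp
  then have "int (card ?many) = int ((q - 1) ^ card D) - 1 - int (card D) * int (q - 2)"
    using card_pos_funs[OF D] card_pos_funs_few_deficient[OF q D] by simp
  moreover have "int (q - 2) = int q - 2" "int (q - 1) = int q - 1" using q by auto
  ultimately show ?thesis by (simp add: of_nat_power)
qed

text \<open>Functions on \<open>D\<close> whose deficient positions lie in \<open>E \<subseteq> D\<close> correspond to functions on
  \<open>E\<close> (extend by the maximal value \<open>q - 1\<close>), with the same deficient set.\<close>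

lemma card_pos_funs_deficient_within:
  assumes "q \<ge> 2" "E \<subseteq> D"
  shows "card {g \<in> pos_funs q D. deficient q D g \<subseteq> E \<and> P (deficient q D g)}
    = card {h \<in> pos_funs q E. P (deficient q E h)}"
proof -
  let ?res = "\<lambda>g x. if x \<in> E then g x else (0::nat)"
  let ?ext = "\<lambda>h x. if x \<in> E then h x else if x \<in> D then q - 1 else (0::nat)"
  have def_res: "deficient q E (?res g) = deficient q D g" if "deficient q D g \<subseteq> E" for g
    using that assms(2) unfolding deficient_def by auto
  have def_ext: "deficient q D (?ext h) = deficient q E h" for h
    using assms(2) unfolding deficient_def by auto
  have "bij_betw ?res {g \<in> pos_funs q D. deficient q D g \<subseteq> E \<and> P (deficient q D g)}
      {h \<in> pos_funs q E. P (deficient q E h)}"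
  proof (rule bij_betw_byWitness[where f' = ?ext])
    show "\<forall>g\<in>{g \<in> pos_funs q D. deficient q D g \<subseteq> E \<and> P (deficient q D g)}. ?ext (?res g) = g"
    proof (intro ballI ext)
      fix g x assume g: "g \<in> {g \<in> pos_funs q D. deficient q D g \<subseteq> E \<and> P (deficient q D g)}"
      show "?ext (?res g) x = g x"
      proof (cases "x \<in> D - E")
        case True
        then have "x \<notin> deficient q D g" using g by auto
        with True g show ?thesis unfolding pos_funs_def deficient_def by force
      qed (use g in \<open>auto simp: pos_funs_def\<close>)
    qed
    show "\<forall>h\<in>{h \<in> pos_funs q E. P (deficient q E h)}. ?res (?ext h) = h"
      unfolding pos_funs_def by (auto simp: fun_eq_iff)
    show "?res ` {g \<in> pos_funs q D. deficient q D g \<subseteq> E \<and> P (deficient q D g)}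
        \<subseteq> {h \<in> pos_funs q E. P (deficient q E h)}"
      using def_res assms unfolding pos_funs_def by auto
    show "?ext ` {h \<in> pos_funs q E. P (deficient q E h)}
        \<subseteq> {g \<in> pos_funs q D. deficient q D g \<subseteq> E \<and> P (deficient q D g)}"
      using def_ext assms unfolding pos_funs_def by (auto simp: deficient_def)
  qed
  then show ?thesis by (rule bij_betw_same_card)
qed

definition collinear :: "('a \<times> 'b) set \<Rightarrow> bool" where
  "collinear M \<longleftrightarrow> (\<forall>x\<in>M. \<forall>y\<in>M. fst x = fst y \<or> snd x = snd y)"

lemma collinear_in_line:
  assumes "collinear M"
  shows "(\<exists>i. M \<subseteq> {i} \<times> UNIV) \<or> (\<exists>c. M \<subseteq> UNIV \<times> {c})"
proof (cases "\<exists>x\<in>M. \<exists>y\<in>M. fst x \<noteq> fst y")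
  case True
  then obtain x y where x: "x \<in> M" and y: "y \<in> M" and "fst x \<noteq> fst y" by blast
  then have xy: "snd x = snd y" using assms unfolding collinear_def by blast
  have "snd z = snd x" if z: "z \<in> M" for z
  proof (rule ccontr)
    assume "snd z \<noteq> snd x"
    moreover have "fst z = fst x \<or> snd z = snd x" "fst z = fst y \<or> snd z = snd y"
      using assms x y z unfolding collinear_def by blast+
    ultimately show False using xy \<open>fst x \<noteq> fst y\<close> by auto
  qed
  then have "M \<subseteq> UNIV \<times> {snd x}" by (auto simp: mem_Times_iff)
  then show ?thesis by (intro disjI2 exI)
next
  case one_row: False
  show ?thesis
  proof (cases "M = {}")
    case False
    then obtain x where x: "x \<in> M" by blast
    have "M \<subseteq> {fst x} \<times> UNIV"
    proof
      fix y assume "y \<in> M"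
      then have "fst y = fst x" using one_row x by blast
      then show "y \<in> {fst x} \<times> UNIV" by (simp add: mem_Times_iff)
    qed
    then show ?thesis by (intro disjI1 exI)
  qed simp
qed

lemma collinear_if_card_le_1: "finite M \<Longrightarrow> card M \<le> 1 \<Longrightarrow> collinear M"
  unfolding collinear_def by (metis One_nat_def card_le_Suc0_iff_eq)

lemma collinear_in_row:
  assumes "M \<subseteq> {i} \<times> S"
  shows "collinear M"
proof -
  have "fst x = i" if "x \<in> M" for x using assms that by auto
  then show ?thesis unfolding collinear_def by simp
qed

lemma collinear_in_col:
  assumes "M \<subseteq> R \<times> {c}"
  shows "collinear M"
proof -
  have "snd x = c" if "x \<in> M" for x using assms that by auto
  then show ?thesis unfolding collinear_def by simp
qed

text \<open>In a full block two deficient positions in different rows and columns would allow a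
  switch, so the deficient positions of a full block are collinear.\<close>

lemma full_block_deficient_collinear:
  assumes "K \<in> full_blocks q R S"
  shows "collinear (deficient q (R \<times> S) (case_prod K))"
proof -
  have pos: "\<forall>i\<in>R. \<forall>c\<in>S. 0 < K i c" and sf: "swap_free q R S K"
    using assms unfolding full_blocks_def by auto
  have "i = i' \<or> c = c'"
    if "i \<in> R" "c \<in> S" "K i c < q - 1" "i' \<in> R" "c' \<in> S" "K i' c' < q - 1" for i c i' c'
    using sf[unfolded swap_free_def, rule_format, of i i' c' c] pos that by fastforce
  then show ?thesis unfolding collinear_def deficient_def by auto
qed

lemma card_full_blocks_collinear:
  "card (full_blocks q R S) = card {g \<in> pos_funs q (R \<times> S). collinear (deficient q (R \<times> S) g)}"
proof -
  have "bij_betw case_prod (full_blocks q R S)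
      {g \<in> pos_funs q (R \<times> S). collinear (deficient q (R \<times> S) g)}"
  proof (rule bij_betw_byWitness[where f' = curry])
    show "case_prod ` full_blocks q R S \<subseteq> {g \<in> pos_funs q (R \<times> S). collinear (deficient q (R \<times> S) g)}"
    proof (rule image_subsetI, intro CollectI conjI)
      fix B assume B: "B \<in> full_blocks q R S"
      then have "qary_on q R S B" and "\<forall>i\<in>R. \<forall>c\<in>S. 0 < B i c"
        unfolding full_blocks_def by auto
      then show "case_prod B \<in> pos_funs q (R \<times> S)"
        unfolding pos_funs_def qary_on_def by (auto simp: Suc_le_eq)
      show "collinear (deficient q (R \<times> S) (case_prod B))"
        using B by (rule full_block_deficient_collinear)
    qed
    show "curry ` {g \<in> pos_funs q (R \<times> S). collinear (deficient q (R \<times> S) g)} \<subseteq> full_blocks q R S"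
    proof (clarify)
      fix g assume g: "g \<in> pos_funs q (R \<times> S)" "collinear (deficient q (R \<times> S) g)"
      then have range: "\<forall>i c. ((i, c) \<in> R \<times> S \<longrightarrow> 1 \<le> g (i, c) \<and> g (i, c) < q)
          \<and> ((i, c) \<notin> R \<times> S \<longrightarrow> g (i, c) = 0)"
        unfolding pos_funs_def by auto
      have "swap_free q R S (curry g)"
        unfolding swap_free_def
      proof (intro ballI impI)
        fix i i' c c' assume mem: "i \<in> R" "i' \<in> R" "c \<in> S" "c' \<in> S"
          and "i \<noteq> i' \<and> c \<noteq> c' \<and> 0 < curry g i c \<and> 0 < curry g i' c'"
        then have "\<not> ((i, c') \<in> deficient q (R \<times> S) g \<and> (i', c) \<in> deficient q (R \<times> S) g)"
          using g(2) unfolding collinear_def by fastforce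
        with range mem show "curry g i c' = q - 1 \<or> curry g i' c = q - 1"
          unfolding deficient_def by fastforce
      qed
      moreover have "qary_on q R S (curry g)" using range unfolding qary_on_def by auto
      moreover have "\<forall>i\<in>R. \<forall>c\<in>S. 0 < curry g i c" using range by fastforce
      ultimately show "curry g \<in> full_blocks q R S" unfolding full_blocks_def by blast
    qed
  qed auto
  then show ?thesis by (rule bij_betw_same_card)
qed

definition many_deficient_in :: "nat \<Rightarrow> 'a set \<Rightarrow> 'a set \<Rightarrow> ('a \<Rightarrow> nat) set" where
  "many_deficient_in q D E = {g \<in> pos_funs q D. deficient q D g \<subseteq> E \<and> 2 \<le> card (deficient q D g)}"

lemma card_many_deficient_in:
  assumes q: "q \<ge> 2" and E: "E \<subseteq> D" "finite E"
  shows "int (card (many_deficient_in q D E)) = (int q - 1) ^ card E - 1 - int (card E) * (int q - 2)"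
  using card_pos_funs_deficient_within[OF q E(1), where P = "\<lambda>X. 2 \<le> card X"]
    card_pos_funs_many_deficient[OF q E(2)]
  unfolding many_deficient_in_def by simp

lemma many_deficient_in_disjoint:
  assumes "finite E" "card (E \<inter> E') \<le> 1"
  shows "many_deficient_in q D E \<inter> many_deficient_in q D E' = {}"
proof -
  have "card (deficient q D g) \<le> 1" if "deficient q D g \<subseteq> E" "deficient q D g \<subseteq> E'" for g
    using card_mono[of "E \<inter> E'" "deficient q D g"] that assms by auto
  then show ?thesis unfolding many_deficient_in_def by fastforce
qed

lemma collinear_deficient_cases:
  fixes R :: "'a set" and S :: "'b set"
  assumes fin: "finite R" "finite S"
  shows "{g \<in> pos_funs q (R \<times> S). collinear (deficient q (R \<times> S) g)}
    = {g \<in> pos_funs q (R \<times> S). card (deficient q (R \<times> S) g) \<le> 1}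
      \<union> (\<Union>i\<in>R. many_deficient_in q (R \<times> S) ({i} \<times> S))
      \<union> (\<Union>c\<in>S. many_deficient_in q (R \<times> S) (R \<times> {c}))"
    (is "?C = ?few \<union> ?rows \<union> ?cols")
proof (intro set_eqI iffI)
  let ?M = "deficient q (R \<times> S)"
  have M_sub: "?M g \<subseteq> R \<times> S" for g unfolding deficient_def by auto
  fix g
  assume g: "g \<in> ?C"
  show "g \<in> ?few \<union> ?rows \<union> ?cols"
  proof (cases "card (?M g) \<le> 1")
    case False
    then have "?M g \<noteq> {}" by auto
    then obtain x where "x \<in> ?M g" by blast
    then have x: "fst x \<in> R" "snd x \<in> S" using M_sub[of g] by auto
    from g consider i where "?M g \<subseteq> {i} \<times> UNIV" | c where "?M g \<subseteq> UNIV \<times> {c}"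
      using collinear_in_line by blast
    then show ?thesis
    proof cases
      case (1 i)
      then have "fst x = i" using \<open>x \<in> ?M g\<close> by auto
      with 1 have "?M g \<subseteq> {fst x} \<times> S" using M_sub[of g] by auto
      with x g False show ?thesis unfolding many_deficient_in_def by auto
    next
      case (2 c)
      then have "snd x = c" using \<open>x \<in> ?M g\<close> by auto
      with 2 have "?M g \<subseteq> R \<times> {snd x}" using M_sub[of g] by auto
      with x g False show ?thesis unfolding many_deficient_in_def by auto
    qed
  qed (use g in auto)
next
  let ?M = "deficient q (R \<times> S)"
  fix g assume g: "g \<in> ?few \<union> ?rows \<union> ?cols"
  then have "g \<in> pos_funs q (R \<times> S)" unfolding many_deficient_in_def by auto
  moreover from g consider "card (?M g) \<le> 1" | i where "?M g \<subseteq> {i} \<times> S" | c where "?M g \<subseteq> R \<times> {c}"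
    unfolding many_deficient_in_def by blast
  then have "collinear (?M g)"
  proof cases
    case 1
    moreover have "finite (?M g)" using fin unfolding deficient_def by auto
    ultimately show ?thesis by (rule collinear_if_card_le_1[rotated])
  qed (auto intro: collinear_in_row collinear_in_col)
  ultimately show "g \<in> ?C" by simp
qed

text \<open>The number of full blocks on an \<open>r \<times> s\<close> rectangle is \<open>f_q q r s\<close>: the deficient set has at
  most one element (\<open>1 + r s (q - 2)\<close> blocks), or at least two in one row (for each of the \<open>r\<close>
  rows, \<open>(q-1)^s - 1 - s (q - 2)\<close> blocks), or at least two in one column.\<close>

lemma card_full_blocks:
  fixes R :: "'a set" and S :: "'b set"
  assumes q: "q \<ge> 2" and R: "finite R" and S: "finite S"
  shows "int (card (full_blocks q R S)) = f_q q (card R) (card S)"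
proof -
  let ?few = "{g \<in> pos_funs q (R \<times> S). card (deficient q (R \<times> S) g) \<le> 1}"
  let ?row = "\<lambda>i. many_deficient_in q (R \<times> S) ({i} \<times> S)"
  let ?col = "\<lambda>c. many_deficient_in q (R \<times> S) (R \<times> {c})"
  have fin: "finite X" if "X \<subseteq> pos_funs q (R \<times> S)" for X
    using finite_subset[OF that finite_pos_funs] R S by blast
  have fins: "finite ?few" "finite (\<Union>i\<in>R. ?row i)" "finite (\<Union>c\<in>S. ?col c)"
    by (auto intro!: fin simp: many_deficient_in_def)
  have "?row i \<inter> ?row i' = {}" if "i \<noteq> i'" for i i'
    using that by (intro many_deficient_in_disjoint) (auto simp: S Times_Int_Times)
  then have card_rows: "card (\<Union>i\<in>R. ?row i) = (\<Sum>i\<in>R. card (?row i))"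
    by (intro card_UN_disjoint[OF R]) (auto intro!: fin simp: many_deficient_in_def)
  have "?col c \<inter> ?col c' = {}" if "c \<noteq> c'" for c c'
    using that by (intro many_deficient_in_disjoint) (auto simp: R Times_Int_Times)
  then have card_cols: "card (\<Union>c\<in>S. ?col c) = (\<Sum>c\<in>S. card (?col c))"
    by (intro card_UN_disjoint[OF S]) (auto intro!: fin simp: many_deficient_in_def)
  have "card (({i} \<times> S) \<inter> (R \<times> {c})) \<le> 1" for i c
    using card_mono[of "{(i, c)}" "({i} \<times> S) \<inter> (R \<times> {c})"] by fastforce
  then have "?row i \<inter> ?col c = {}" for i c
    by (intro many_deficient_in_disjoint) (auto simp: S)
  then have "(\<Union>i\<in>R. ?row i) \<inter> (\<Union>c\<in>S. ?col c) = {}" by blast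
  moreover have "?few \<inter> (\<Union>i\<in>R. ?row i) = {}" "?few \<inter> (\<Union>c\<in>S. ?col c) = {}"
    unfolding many_deficient_in_def by auto
  ultimately have "card (?few \<union> (\<Union>i\<in>R. ?row i) \<union> (\<Union>c\<in>S. ?col c))
      = card ?few + (\<Sum>i\<in>R. card (?row i)) + (\<Sum>c\<in>S. card (?col c))"
    using fins by (simp add: card_Un_disjoint Int_Un_distrib2 card_rows card_cols)
  then have "int (card (full_blocks q R S))
      = int (card ?few) + (\<Sum>i\<in>R. int (card (?row i))) + (\<Sum>c\<in>S. int (card (?col c)))"
    unfolding card_full_blocks_collinear collinear_deficient_cases[OF R S] by simp
  also have "\<dots> = 1 + int (card R * card S) * (int q - 2)
      + int (card R) * ((int q - 1) ^ card S - 1 - int (card S) * (int q - 2))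
      + int (card S) * ((int q - 1) ^ card R - 1 - int (card R) * (int q - 2))"
  proof -
    have "card ?few = 1 + card R * card S * (q - 2)"
      using card_pos_funs_few_deficient[OF q, of "R \<times> S"] R S by (simp add: card_cartesian_product)
    moreover have "int (card (?row i)) = (int q - 1) ^ card S - 1 - int (card S) * (int q - 2)" if "i \<in> R" for i
      using card_many_deficient_in[OF q, of "{i} \<times> S" "R \<times> S"] S that by (auto simp: card_cartesian_product)
    moreover have "int (card (?col c)) = (int q - 1) ^ card R - 1 - int (card R) * (int q - 2)" if "c \<in> S" for c
      using card_many_deficient_in[OF q, of "R \<times> {c}" "R \<times> S"] R that by (auto simp: card_cartesian_product)
    ultimately show ?thesis using q by (simp add: of_nat_diff)
  qed
  also have "\<dots> = f_q q (card R) (card S)"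
    unfolding f_q_def by (simp add: algebra_simps)
  finally show ?thesis .
qed

section \<open>Uniqueness of full blocks and of block-shaped matrices\<close>

text \<open>If all entries of \<open>K\<close> outside row \<open>p\<close> have the maximal value \<open>t\<close>, then a matrix bounded by
  \<open>t\<close> with the same line sums as \<open>K\<close> coincides with \<open>K\<close>: the rows other than \<open>p\<close> are forced
  by their row sums, and then row \<open>p\<close> by the column sums.\<close>

lemma eq_if_maximal_outside_row:
  fixes B K :: "'a \<Rightarrow> 'b \<Rightarrow> nat"
  assumes fin: "finite R" "finite S"
    and bound: "\<And>i c. i \<in> R \<Longrightarrow> c \<in> S \<Longrightarrow> B i c \<le> t"
    and max: "\<And>i c. i \<in> R \<Longrightarrow> i \<noteq> p \<Longrightarrow> c \<in> S \<Longrightarrow> K i c = t"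
    and rows: "\<And>i. i \<in> R \<Longrightarrow> (\<Sum>c\<in>S. B i c) = (\<Sum>c\<in>S. K i c)"
    and cols: "\<And>c. c \<in> S \<Longrightarrow> (\<Sum>i\<in>R. B i c) = (\<Sum>i\<in>R. K i c)"
    and i: "i \<in> R" and c: "c \<in> S"
  shows "B i c = K i c"
proof -
  have other: "B i' c' = K i' c'" if "i' \<in> R" "i' \<noteq> p" "c' \<in> S" for i' c'
    using sum_mono_inv[OF rows[OF \<open>i' \<in> R\<close>] _ \<open>c' \<in> S\<close> fin(2)] bound max that by simp
  show ?thesis
  proof (cases "i = p")
    case True
    have "(\<Sum>i\<in>R - {p}. B i c) = (\<Sum>i\<in>R - {p}. K i c)" by (rule sum.cong) (use other c in auto)
    with cols[OF c] show ?thesis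
      using i True fin by (simp add: sum.remove)
  qed (use other i c in auto)
qed

text \<open>A full block is determined by its line sums among all q-ary matrices: its deficient
  positions lie in one row or one column, and all other entries are maximal.\<close>

lemma full_block_unique:
  assumes fin: "finite R" "finite S" and K: "K \<in> full_blocks q R S"
    and B: "\<And>i c. i \<in> R \<Longrightarrow> c \<in> S \<Longrightarrow> B i c < q"
    and rows: "\<And>i. i \<in> R \<Longrightarrow> (\<Sum>c\<in>S. B i c) = (\<Sum>c\<in>S. K i c)"
    and cols: "\<And>c. c \<in> S \<Longrightarrow> (\<Sum>i\<in>R. B i c) = (\<Sum>i\<in>R. K i c)"
    and i: "i \<in> R" and c: "c \<in> S"
  shows "B i c = K i c"
proof -
  have K_max: "K i c = q - 1" if "i \<in> R" "c \<in> S" "(i, c) \<notin> deficient q (R \<times> S) (case_prod K)" for i c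
    using K that unfolding full_blocks_def qary_on_def deficient_def by fastforce
  have B_le: "B i c \<le> q - 1" if "i \<in> R" "c \<in> S" for i c using B[OF that] by simp
  from collinear_in_line[OF full_block_deficient_collinear[OF K]]
  consider i0 where "deficient q (R \<times> S) (case_prod K) \<subseteq> {i0} \<times> UNIV"
    | c0 where "deficient q (R \<times> S) (case_prod K) \<subseteq> UNIV \<times> {c0}"
    by blast
  then show ?thesis
  proof cases
    case (1 i0)
    then have max: "K i c = q - 1" if "i \<in> R" "i \<noteq> i0" "c \<in> S" for i c
      using K_max that by blast
    show ?thesis
      by (rule eq_if_maximal_outside_row[where B = B and K = K and t = "q - 1" and p = i0,
            OF fin B_le max rows cols i c])
  next
    case (2 c0)
    then have max: "K i c = q - 1" if "c \<in> S" "c \<noteq> c0" "i \<in> R" for c i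
      using K_max that by blast
    have "(\<lambda>c i. B i c) c i = (\<lambda>c i. K i c) c i"
      by (rule eq_if_maximal_outside_row[where R = S and S = R and B = "\<lambda>c i. B i c"
            and K = "\<lambda>c i. K i c" and t = "q - 1" and p = c0])
        (use fin B_le max rows cols i c in auto)
    then show ?thesis by simp
  qed
qed

text \<open>Beside the
  block \<open>B \<le> A\<close>: there \<open>A\<close> is either maximal or its whole column vanishes.\<close>

lemma block_shape_beside_le:
  assumes fin: "finite I" and shape: "block_shape q I J R S A"
    and qary: "qary_on q I J B" and sums: "same_line_sums I J A B"
    and i: "i \<in> R" and c: "c \<in> J - S"
  shows "B i c \<le> A i c"
proof -
  have RI: "R \<subseteq> I"
    and beside: "\<forall>i\<in>R. \<forall>c\<in>J - S. A i c = (if nonzero_col (I - R) A c then q - 1 else 0)"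
    using shape unfolding block_shape_def by auto
  show ?thesis
  proof (cases "nonzero_col (I - R) A c")
    case True
    then show ?thesis using beside i c qary RI unfolding qary_on_def by fastforce
  next
    case False
    then have "A i' c = 0" if "i' \<in> I" for i'
      using beside c that unfolding nonzero_col_def by (cases "i' \<in> R") auto
    then have "(\<Sum>i\<in>I. B i c) = 0" using sums c unfolding same_line_sums_def by simp
    then show ?thesis using fin i RI by auto
  qed
qed

text \<open>Consequently \<open>B\<close> has the same line sums as \<open>A\<close> on the block: each row of \<open>R\<close> carries at
  least as much mass on \<open>S\<close> in \<open>B\<close> as in \<open>A\<close>, each column of \<open>S\<close> at most as much, and the totals
  over the block then force equality everywhere.\<close>

lemma block_shape_block_sums:
  assumes fin: "finite I" "finite J" and shape: "block_shape q I J R S A"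
    and qary: "qary_on q I J B" and sums: "same_line_sums I J A B"
  shows "\<And>i. i \<in> R \<Longrightarrow> (\<Sum>c\<in>S. B i c) = (\<Sum>c\<in>S. A i c)"
    and "\<And>c. c \<in> S \<Longrightarrow> (\<Sum>i\<in>R. B i c) = (\<Sum>i\<in>R. A i c)"
    and "\<And>c. c \<in> S \<Longrightarrow> (\<Sum>i\<in>I - R. B i c) = 0"
proof -
  have RI: "R \<subseteq> I" and SJ: "S \<subseteq> J" and below: "\<forall>i\<in>I - R. \<forall>c\<in>S. A i c = 0"
    using shape unfolding block_shape_def by auto
  have fR: "finite R" and fS: "finite S" using RI SJ fin finite_subset by auto
  have row_mass: "(\<Sum>c\<in>S. A i c) \<le> (\<Sum>c\<in>S. B i c)" if i: "i \<in> R" for i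
  proof -
    have "(\<Sum>c\<in>J - S. B i c) \<le> (\<Sum>c\<in>J - S. A i c)"
      by (rule sum_mono) (use block_shape_beside_le[OF fin(1) shape qary sums i] in auto)
    moreover have "(\<Sum>c\<in>J. B i c) = (\<Sum>c\<in>J. A i c)" using sums i RI unfolding same_line_sums_def by auto
    ultimately show ?thesis using sum.subset_diff[OF SJ fin(2)] by (metis add_le_cancel_left add.commute)
  qed
  have col_mass: "(\<Sum>i\<in>R. B i c) + (\<Sum>i\<in>I - R. B i c) = (\<Sum>i\<in>R. A i c)" if c: "c \<in> S" for c
  proof -
    have "(\<Sum>i\<in>I. B i c) = (\<Sum>i\<in>I. A i c)" using sums c SJ unfolding same_line_sums_def by auto
    moreover have "(\<Sum>i\<in>I - R. A i c) = 0" using below c by simp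
    ultimately show ?thesis using sum.subset_diff[OF RI fin(1)] by (metis add.commute add_0)
  qed
  have total: "(\<Sum>i\<in>R. \<Sum>c\<in>S. A i c) = (\<Sum>i\<in>R. \<Sum>c\<in>S. B i c)"
  proof (rule antisym)
    show "(\<Sum>i\<in>R. \<Sum>c\<in>S. A i c) \<le> (\<Sum>i\<in>R. \<Sum>c\<in>S. B i c)" by (rule sum_mono) (rule row_mass)
    have "(\<Sum>i\<in>R. \<Sum>c\<in>S. B i c) = (\<Sum>c\<in>S. \<Sum>i\<in>R. B i c)" by (rule sum.swap)
    also have "\<dots> \<le> (\<Sum>c\<in>S. \<Sum>i\<in>R. A i c)" by (rule sum_mono) (use col_mass in fastforce)
    also have "\<dots> = (\<Sum>i\<in>R. \<Sum>c\<in>S. A i c)" by (rule sum.swap)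
    finally show "(\<Sum>i\<in>R. \<Sum>c\<in>S. B i c) \<le> (\<Sum>i\<in>R. \<Sum>c\<in>S. A i c)" .
  qed
  show "(\<Sum>c\<in>S. B i c) = (\<Sum>c\<in>S. A i c)" if "i \<in> R" for i
    using sum_mono_inv[OF total row_mass that fR] by simp
  show col_eq: "(\<Sum>i\<in>R. B i c) = (\<Sum>i\<in>R. A i c)" if "c \<in> S" for c
  proof -
    have swapped: "(\<Sum>c\<in>S. \<Sum>i\<in>R. B i c) = (\<Sum>c\<in>S. \<Sum>i\<in>R. A i c)"
      using total by (metis sum.swap)
    have "(\<Sum>i\<in>R. B i c) \<le> (\<Sum>i\<in>R. A i c)" if "c \<in> S" for c
      using col_mass[OF that] by linarith
    from sum_mono_inv[OF swapped this \<open>c \<in> S\<close> fS] show ?thesis .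
  qed
  show "(\<Sum>i\<in>I - R. B i c) = 0" if "c \<in> S" for c
    using col_mass[OF that] col_eq[OF that] by simp
qed

lemma block_shape_forced:
  assumes fin: "finite I" "finite J" and shape: "block_shape q I J R S A"
    and qary: "qary_on q I J B" and sums: "same_line_sums I J A B"
  shows "\<And>i c. i \<in> I - R \<Longrightarrow> c \<in> S \<Longrightarrow> B i c = 0"
    and "\<And>i c. i \<in> R \<Longrightarrow> c \<in> J - S \<Longrightarrow> B i c = A i c"
proof -
  note block_sums = block_shape_block_sums[OF fin shape qary sums]
  show "B i c = 0" if "i \<in> I - R" "c \<in> S" for i c
    using block_sums(3)[OF that(2)] that fin by simp
  show "B i c = A i c" if i: "i \<in> R" and c: "c \<in> J - S" for i c
  proof -
    have RI: "R \<subseteq> I" and SJ: "S \<subseteq> J" using shape unfolding block_shape_def by auto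
    have "(\<Sum>c\<in>J. B i c) = (\<Sum>c\<in>J. A i c)" using sums i RI unfolding same_line_sums_def by auto
    then have "(\<Sum>c\<in>J - S. B i c) = (\<Sum>c\<in>J - S. A i c)"
      using block_sums(1)[OF i] sum.subset_diff[OF SJ fin(2), of "B i"]
        sum.subset_diff[OF SJ fin(2), of "A i"] by linarith
    then show ?thesis
      using sum_mono_inv[of "B i" "J - S" "A i" c] block_shape_beside_le[OF fin(1) shape qary sums i] c fin
      by auto
  qed
qed

lemma block_shape_lonesum:
  assumes fin: "finite I" "finite J" and qary: "qary_on q I J A" and shape: "block_shape q I J R S A"
    and block: "restr R S A \<in> full_blocks q R S"
    and rest: "lonesum_on q (I - R) (J - S) (restr (I - R) (J - S) A)"
  shows "lonesum_on q I J A"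
  unfolding lonesum_on_def
proof (intro conjI allI impI)
  fix B assume B: "qary_on q I J B \<and> same_line_sums I J A B"
  then have qaryB: "qary_on q I J B" and sums: "same_line_sums I J A B" by auto
  have RI: "R \<subseteq> I" and SJ: "S \<subseteq> J" and below: "\<forall>i\<in>I - R. \<forall>c\<in>S. A i c = 0"
    using shape unfolding block_shape_def by auto
  have fR: "finite R" and fS: "finite S" using RI SJ fin finite_subset by auto
  note block_sums = block_shape_block_sums[OF fin shape qaryB sums]
  note forced = block_shape_forced[OF fin shape qaryB sums]
  have on_block: "B i c = A i c" if "i \<in> R" "c \<in> S" for i c
  proof -
    have "B i c = restr R S A i c"
    proof (rule full_block_unique[OF fR fS block])
      show "B i c < q" if "i \<in> R" "c \<in> S" for i c using qaryB that RI SJ unfolding qary_on_def by auto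
    qed (use block_sums(1,2) that in \<open>auto simp: restr_def\<close>)
    then show ?thesis using that by (simp add: restr_def)
  qed
  have outside_rest: "B i c = A i c" if "i \<in> I" "c \<in> J" "\<not> (i \<in> I - R \<and> c \<in> J - S)" for i c
    using that on_block forced(1,2) below by (cases "i \<in> R"; cases "c \<in> S") auto
  have "restr (I - R) (J - S) B = restr (I - R) (J - S) A"
  proof -
    have "same_line_sums (I - R) (J - S) (restr (I - R) (J - S) A) (restr (I - R) (J - S) B)"
      using same_line_sums_restr[OF fin Diff_subset Diff_subset outside_rest] sums by simp
    moreover have "qary_on q (I - R) (J - S) (restr (I - R) (J - S) B)"
      using qaryB by (rule qary_on_restr) auto
    ultimately show ?thesis using rest unfolding lonesum_on_def by simp
  qed
  then have in_rest: "B i c = A i c" if "i \<in> I - R" "c \<in> J - S" for i c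
    using that fun_cong[OF fun_cong[OF \<open>restr _ _ B = _\<close>, of i], of c] unfolding restr_def by simp
  show "B = A"
  proof (intro ext)
    fix i c
    show "B i c = A i c"
    proof (cases "i \<in> I \<and> c \<in> J")
      case True
      then show ?thesis using in_rest outside_rest by blast
    qed (use qary qaryB in \<open>auto simp: qary_on_def\<close>)
  qed
qed (rule qary)

section \<open>Decomposition into a full block and a smaller strong lonesum matrix\<close>

definition glue :: "nat \<Rightarrow> 'a set \<Rightarrow> 'b set \<Rightarrow> 'a set \<Rightarrow> 'b set \<Rightarrow>
    ('a \<Rightarrow> 'b \<Rightarrow> nat) \<Rightarrow> ('a \<Rightarrow> 'b \<Rightarrow> nat) \<Rightarrow> 'a \<Rightarrow> 'b \<Rightarrow> nat" where
  "glue q I J R S K A' = (\<lambda>i c.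
     if i \<in> R then (if c \<in> S then K i c else if c \<in> J \<and> nonzero_col (I - R) A' c then q - 1 else 0)
     else A' i c)"

lemma glue_props:
  assumes q: "q \<ge> 2" and fin: "finite I" "finite J" and RI: "R \<subseteq> I" and SJ: "S \<subseteq> J"
    and ne: "R \<noteq> {}" "S \<noteq> {}" and K: "K \<in> full_blocks q R S"
    and A': "lonesum_on q (I - R) (J - S) A'"
  shows "lonesum_on q I J (glue q I J R S K A')" "glue q I J R S K A' \<noteq> (\<lambda>_ _. 0)"
    "top_rows I J (glue q I J R S K A') = R" "top_cols I J (glue q I J R S K A') = S"
    "restr R S (glue q I J R S K A') = K" "restr (I - R) (J - S) (glue q I J R S K A') = A'"
proof -
  let ?G = "glue q I J R S K A'"
  have qaryK: "qary_on q R S K" and pos: "\<forall>i\<in>R. \<forall>c\<in>S. 0 < K i c"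
    using K unfolding full_blocks_def by auto
  have qaryA': "qary_on q (I - R) (J - S) A'" using A' by (rule lonesum_on_qary)
  have qaryG: "qary_on q I J ?G"
    using qaryK qaryA' RI SJ q unfolding qary_on_def glue_def by auto
  have nonzero_G: "nonzero_col (I - R) ?G c = nonzero_col (I - R) A' c" for c
    unfolding nonzero_col_def glue_def by auto
  have shape: "block_shape q I J R S ?G"
    unfolding block_shape_def nonzero_G
    using pos qaryA' RI SJ ne unfolding glue_def qary_on_def by auto
  show restr_K: "restr R S ?G = K"
    using qaryK unfolding restr_def glue_def qary_on_def by (auto simp: fun_eq_iff)
  show restr_A': "restr (I - R) (J - S) ?G = A'"
    using qaryA' unfolding restr_def glue_def qary_on_def by (auto simp: fun_eq_iff)
  show "lonesum_on q I J ?G"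
    using block_shape_lonesum[OF fin qaryG shape] restr_K restr_A' K A' by simp
  show "top_rows I J ?G = R" by (rule block_shape_top_rows[OF q shape])
  show "top_cols I J ?G = S" by (rule block_shape_top_cols[OF q shape])
  obtain i c where "i \<in> R" "c \<in> S" using ne by blast
  then have "0 < ?G i c" using pos unfolding glue_def by auto
  then show "?G \<noteq> (\<lambda>_ _. 0)" by (auto simp: fun_eq_iff)
qed

lemma lonesum_decompose:
  assumes q: "q \<ge> 2" and fin: "finite I" "finite J" and A: "lonesum_on q I J A"
    and nz: "A \<noteq> (\<lambda>_ _. 0)"
  defines "R \<equiv> top_rows I J A" and "S \<equiv> top_cols I J A"
  shows "R \<subseteq> I" "S \<subseteq> J" "R \<noteq> {}" "S \<noteq> {}" "restr R S A \<in> full_blocks q R S"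
    "lonesum_on q (I - R) (J - S) (restr (I - R) (J - S) A)"
    "A = glue q I J R S (restr R S A) (restr (I - R) (J - S) A)"
proof -
  have qary: "qary_on q I J A" using A by (rule lonesum_on_qary)
  have shape: "block_shape q I J R S A"
    unfolding R_def S_def
    by (rule block_shape_top[OF q fin qary lonesum_on_swap_free[OF fin A] nz])
  then have RI: "R \<subseteq> I" and SJ: "S \<subseteq> J" and ne: "R \<noteq> {}" "S \<noteq> {}"
    and block: "\<forall>i\<in>R. \<forall>c\<in>S. 0 < A i c" and below: "\<forall>i\<in>I - R. \<forall>c\<in>S. A i c = 0"
    and beside: "\<forall>i\<in>R. \<forall>c\<in>J - S. A i c = (if nonzero_col (I - R) A c then q - 1 else 0)"
    unfolding block_shape_def by auto
  show "R \<subseteq> I" "S \<subseteq> J" "R \<noteq> {}" "S \<noteq> {}" by fact+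
  have fR: "finite R" and fS: "finite S" using RI SJ fin finite_subset by auto
  show "restr R S A \<in> full_blocks q R S"
    unfolding full_blocks_def
  proof (intro CollectI conjI)
    show "qary_on q R S (restr R S A)" using qary RI SJ by (rule qary_on_restr)
    show "\<forall>i\<in>R. \<forall>c\<in>S. 0 < restr R S A i c" using block unfolding restr_def by auto
    show "swap_free q R S (restr R S A)"
      using lonesum_on_swap_free[OF fR fS lonesum_on_restr[OF fin RI SJ A]] .
  qed
  show "lonesum_on q (I - R) (J - S) (restr (I - R) (J - S) A)"
    using lonesum_on_restr[OF fin _ _ A] by auto
  show "A = glue q I J R S (restr R S A) (restr (I - R) (J - S) A)"
  proof (intro ext)
    fix i c
    have "nonzero_col (I - R) (restr (I - R) (J - S) A) c = nonzero_col (I - R) A c" if "c \<in> J - S"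
      using that unfolding nonzero_col_def restr_def by auto
    then show "A i c = glue q I J R S (restr R S A) (restr (I - R) (J - S) A) i c"
      using qary below beside RI unfolding glue_def restr_def qary_on_def by auto
  qed
qed

section \<open>The recursion for the number of strong lonesum matrices\<close>

definition lonesums :: "nat \<Rightarrow> 'a set \<Rightarrow> 'b set \<Rightarrow> ('a \<Rightarrow> 'b \<Rightarrow> nat) set" where
  "lonesums q I J = {A. lonesum_on q I J A}"

lemma finite_qary_on:
  assumes "finite I" "finite J"
  shows "finite {A. qary_on q I J A}"
proof -
  let ?e = "\<lambda>f i c. if (i, c) \<in> I \<times> J then f (i, c) else (0::nat)"
  have "{A. qary_on q I J A} \<subseteq> ?e ` PiE (I \<times> J) (\<lambda>_. {..<q})"
  proof
    fix A assume A: "A \<in> {A. qary_on q I J A}"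
    then have "A = ?e (restrict (case_prod A) (I \<times> J))" unfolding qary_on_def by (auto simp: fun_eq_iff)
    moreover have "restrict (case_prod A) (I \<times> J) \<in> PiE (I \<times> J) (\<lambda>_. {..<q})"
      using A unfolding qary_on_def by auto
    ultimately show "A \<in> ?e ` PiE (I \<times> J) (\<lambda>_. {..<q})" by blast
  qed
  then show ?thesis by (rule finite_subset) (use assms in \<open>auto intro: finite_PiE\<close>)
qed

lemma finite_lonesums:
  assumes "finite I" "finite J"
  shows "finite (lonesums q I J)"
  by (rule finite_subset[OF _ finite_qary_on[OF assms]]) (auto simp: lonesums_def lonesum_on_def)

lemma card_lonesums_fibre:
  assumes q: "q \<ge> 2" and fin: "finite I" "finite J" and RI: "R \<subseteq> I" and SJ: "S \<subseteq> J"
    and ne: "R \<noteq> {}" "S \<noteq> {}"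
  shows "card {A \<in> lonesums q I J - {\<lambda>_ _. 0}. (top_rows I J A, top_cols I J A) = (R, S)}
    = card (full_blocks q R S) * card (lonesums q (I - R) (J - S))"
proof -
  let ?f = "\<lambda>(K, A'). glue q I J R S K A'"
  let ?P = "full_blocks q R S \<times> lonesums q (I - R) (J - S)"
  note glue = glue_props[OF q fin RI SJ ne]
  have "{A \<in> lonesums q I J - {\<lambda>_ _. 0}. (top_rows I J A, top_cols I J A) = (R, S)} = ?f ` ?P"
  proof (intro set_eqI iffI)
    fix A assume "A \<in> {A \<in> lonesums q I J - {\<lambda>_ _. 0}. (top_rows I J A, top_cols I J A) = (R, S)}"
    then have A: "lonesum_on q I J A" "A \<noteq> (\<lambda>_ _. 0)" and "top_rows I J A = R" "top_cols I J A = S"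
      unfolding lonesums_def by auto
    with lonesum_decompose[OF q fin A] show "A \<in> ?f ` ?P"
      unfolding lonesums_def by (intro image_eqI[where x = "(restr R S A, restr (I - R) (J - S) A)"]) auto
  next
    fix A assume "A \<in> ?f ` ?P"
    then obtain K A' where "K \<in> full_blocks q R S" "lonesum_on q (I - R) (J - S) A'"
      and "A = glue q I J R S K A'"
      unfolding lonesums_def by auto
    with glue show "A \<in> {A \<in> lonesums q I J - {\<lambda>_ _. 0}. (top_rows I J A, top_cols I J A) = (R, S)}"
      unfolding lonesums_def by auto
  qed
  moreover have "inj_on ?f ?P"
  proof (rule inj_onI, clarify)
    fix K1 A1 K2 A2 assume "K1 \<in> full_blocks q R S" "A1 \<in> lonesums q (I - R) (J - S)"
      "K2 \<in> full_blocks q R S" "A2 \<in> lonesums q (I - R) (J - S)"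
      and "glue q I J R S K1 A1 = glue q I J R S K2 A2"
    then show "K1 = K2 \<and> A1 = A2" using glue(5,6) unfolding lonesums_def by (metis mem_Collect_eq)
  qed
  ultimately show ?thesis by (simp add: card_image card_cartesian_product)
qed

text \<open>The recursion: apart from the zero matrix, every strong lonesum matrix is determined by its
  nonempty sets of top rows and columns, its full block and the rest.\<close>

lemma card_lonesums_rec:
  assumes q: "q \<ge> 2" and fin: "finite I" "finite J"
  shows "card (lonesums q I J) = 1 + (\<Sum>R\<in>Pow I - {{}}. \<Sum>S\<in>Pow J - {{}}.
    card (full_blocks q R S) * card (lonesums q (I - R) (J - S)))"
proof -
  let ?Z = "\<lambda>_ _. 0 :: nat"
  let ?T = "(Pow I - {{}}) \<times> (Pow J - {{}})"
  let ?top = "\<lambda>A. (top_rows I J A, top_cols I J A)"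
  have "?Z \<in> lonesums q I J" using lonesum_on_zero[OF fin] q unfolding lonesums_def by simp
  then have "card (lonesums q I J) = 1 + card (lonesums q I J - {?Z})"
    using card.remove[OF finite_lonesums[OF fin]] by simp
  moreover have top_sub: "?top ` (lonesums q I J - {?Z}) \<subseteq> ?T"
    using lonesum_decompose(1-4)[OF q fin] unfolding lonesums_def by auto
  have "card (lonesums q I J - {?Z}) = (\<Sum>y\<in>?T. card {A \<in> lonesums q I J - {?Z}. ?top A = y})"
    using sum.group[OF _ _ top_sub, of "\<lambda>_. 1::nat"] finite_lonesums[OF fin] fin by simp
  also have "\<dots> = (\<Sum>(R, S)\<in>?T. card (full_blocks q R S) * card (lonesums q (I - R) (J - S)))"
  proof (rule sum.cong[OF refl])
    fix y assume "y \<in> ?T"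
    then obtain R S where "y = (R, S)" "R \<subseteq> I" "S \<subseteq> J" "R \<noteq> {}" "S \<noteq> {}" by auto
    with card_lonesums_fibre[OF q fin] show "card {A \<in> lonesums q I J - {?Z}. ?top A = y}
        = (case y of (R, S) \<Rightarrow> card (full_blocks q R S) * card (lonesums q (I - R) (J - S)))"
      by simp
  qed
  also have "\<dots> = (\<Sum>R\<in>Pow I - {{}}. \<Sum>S\<in>Pow J - {{}}.
      card (full_blocks q R S) * card (lonesums q (I - R) (J - S)))"
    by (rule sum.cartesian_product[symmetric])
  finally show ?thesis by simp
qed

lemma sum_nonempty_subsets_card:
  fixes F :: "nat \<Rightarrow> int"
  assumes fin: "finite I"
  shows "(\<Sum>R\<in>Pow I - {{}}. F (card R)) = (\<Sum>r\<in>{1..card I}. int (card I choose r) * F r)"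
proof -
  have "card R \<in> {1..card I}" if "R \<subseteq> I" "R \<noteq> {}" for R
    using that fin rev_finite_subset[OF fin that(1)] by (auto simp: Suc_le_eq card_gt_0_iff card_mono)
  then have "card ` (Pow I - {{}}) \<subseteq> {1..card I}" by blast
  then have "(\<Sum>R\<in>Pow I - {{}}. F (card R)) =
      (\<Sum>r\<in>{1..card I}. of_nat (card {R \<in> Pow I - {{}}. card R = r}) * F r)"
    by (rule sum_fun_comp[rotated 2]) (use fin in auto)
  also have "\<dots> = (\<Sum>r\<in>{1..card I}. int (card I choose r) * F r)"
  proof (rule sum.cong[OF refl])
    fix r assume "r \<in> {1..card I}"
    then have "{R \<in> Pow I - {{}}. card R = r} = {R. R \<subseteq> I \<and> card R = r}" by auto
    then show "of_nat (card {R \<in> Pow I - {{}}. card R = r}) * F r = int (card I choose r) * F r"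
      using n_subsets[OF fin, of r] by simp
  qed
  finally show ?thesis .
qed

lemma card_lonesums:
  assumes q: "q \<ge> 2"
  shows "finite I \<Longrightarrow> finite J \<Longrightarrow> int (card (lonesums q I J)) = formula q (card I) (card J)"
proof (induction "card I" arbitrary: I J rule: less_induct)
  case less
  note fin = less.prems
  let ?c = "\<lambda>r s. f_q q r s * formula q (card I - r) (card J - s)"
  have "int (card (lonesums q I J)) = 1 + (\<Sum>R\<in>Pow I - {{}}. \<Sum>S\<in>Pow J - {{}}.
      int (card (full_blocks q R S)) * int (card (lonesums q (I - R) (J - S))))"
    using card_lonesums_rec[OF q fin] by simp
  also have "\<dots> = 1 + (\<Sum>R\<in>Pow I - {{}}. \<Sum>S\<in>Pow J - {{}}. ?c (card R) (card S))"
  proof (intro arg_cong[where f = "\<lambda>x. 1 + x"] sum.cong refl)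
    fix R S assume R: "R \<in> Pow I - {{}}" and S: "S \<in> Pow J - {{}}"
    have fR: "finite R" and fS: "finite S" using R S fin finite_subset by auto
    have cR: "card (I - R) = card I - card R" and cS: "card (J - S) = card J - card S"
      using R S fR fS by (auto simp: card_Diff_subset)
    have "0 < card R" using R fR by (auto simp: card_gt_0_iff)
    moreover have "card R \<le> card I" using R fin by (auto intro: card_mono)
    ultimately have "card (I - R) < card I" using cR by simp
    then have "int (card (lonesums q (I - R) (J - S))) = formula q (card (I - R)) (card (J - S))"
      using less.hyps fin by simp
    then show "int (card (full_blocks q R S)) * int (card (lonesums q (I - R) (J - S)))
        = ?c (card R) (card S)"
      using card_full_blocks[OF q fR fS] cR cS by simp
  qed
  also have "\<dots> = 1 + (\<Sum>R\<in>Pow I - {{}}. \<Sum>s\<in>{1..card J}. int (card J choose s) * ?c (card R) s)"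
    by (simp add: sum_nonempty_subsets_card[OF fin(2), where F = "?c _"])
  also have "\<dots> = 1 + (\<Sum>r\<in>{1..card I}. int (card I choose r) *
      (\<Sum>s\<in>{1..card J}. int (card J choose s) * ?c r s))"
    using sum_nonempty_subsets_card[OF fin(1),
        where F = "\<lambda>r. \<Sum>s\<in>{1..card J}. int (card J choose s) * ?c r s"] by simp
  also have "\<dots> = formula q (card I) (card J)"
    by (subst formula_rec) (simp add: sum_distrib_left mult.assoc mult.left_commute)
  finally show ?case .
qed

theorem theorem3p6:
  fixes q m n :: nat
  assumes "q \<ge> 2" and "m \<ge> 1" and "n \<ge> 1"
  shows "int (num_strong_lonesum q m n) =
    1 + (\<Sum>j=1..min m n. \<Sum>ms\<in>S_set m j. \<Sum>ns\<in>S_set n j.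
           int (multinom m ms) * int (multinom n ns) *
           (\<Prod>i=1..j. f_q q (ms ! i) (ns ! (j + 1 - i))))"
proof -
  have "num_strong_lonesum q m n = card (lonesums q {..<m} {..<n})"
    unfolding num_strong_lonesum_def lonesums_def strong_lonesum_iff ..
  then have "int (num_strong_lonesum q m n) = formula q m n"
    using card_lonesums[OF assms(1), of "{..<m}" "{..<n}"] by simp
  then show ?thesis
    unfolding formula_eq layer_def layer_term_def .
qed

end
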